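(* For every real $q$ with $|q|<1$, $$V^3(q)=V(q^3)\,\frac{1-V(q^3)+V^2(q^3)}{1+2V(q^3)+4V^2(q^3)}.$$
   Context: Ramanujan's cubic continued fraction is $$V(q)=\cfrac{q^{1/3}}{1+\cfrac{q+q^2}{1+\cfrac{q^2+q^4}{1+\cdots}}},\qquad |q|<1,$$ the $n$-th partial numerator after the first being $q^n+q^{2n}$, and $q^{1/3}$ denoting the real cube root of $q$ (so $V(q^3)=q\cdot(\text{continued fraction part at }q^3)$). *)

theory Defs
  imports Complex_Main
begin

fun cf_tail :: "real \<Rightarrow> nat \<Rightarrow> nat \<Rightarrow> real" where
  "cf_tail q k 0 = 1"
| "cf_tail q k (Suc n) = 1 + (q ^ k + q ^ (2 * k)) / cf_tail q (Suc k) n"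

definition cubic_cf_conv :: "real \<Rightarrow> nat \<Rightarrow> real" where
  "cubic_cf_conv q n = root 3 q / cf_tail q 1 n"

definition cubic_cf :: "real \<Rightarrow> real" where
  "cubic_cf q = lim (cubic_cf_conv q)"

end

theory Submission
  imports Defs "HOL-Analysis.Analysis"
begin

text \<open>
  Write \<open>(a; q)\<^sub>n\<close> for \<open>qpoch a q n\<close>. The series
  \<open>F(x) = \<Sum>n. (-x; q)\<^sub>2\<^sub>n q\<^sup>n / (q\<^sup>2; q\<^sup>2)\<^sub>n\<close> satisfies
  \<open>F(x) = F(xq) + (xq + x\<^sup>2q\<^sup>2) F(xq\<^sup>2)\<close>, the recurrence of the tails of the continued fraction,
  and \<open>F(q\<^sup>k)\<close> tends to a nonzero limit; hence the continued fraction converges to \<open>F(1) / F(q)\<close>.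
  Expanding by the \<open>q\<close>-binomial theorem gives \<open>F(q) = e \<psi>(q\<^sup>3)\<close> and \<open>F(1) = e f(q, q\<^sup>2)\<close> with
  \<open>e = \<Sum>n. q\<^sup>n / (q; q)\<^sub>n\<close>, so \<open>V(q) = q\<^bsup>1/3\<^esup> \<psi>(q\<^sup>3) / f(q, q\<^sup>2)\<close>.

  Gauss's product \<open>\<psi>(y) = (y\<^sup>2; y\<^sup>2)\<^sub>\<infinity> (-y; y)\<^sub>\<infinity>\<close> yields
  \<open>\<psi>(x) \<psi>(\<omega>x) \<psi>(\<omega>\<^sup>2x) \<psi>(x\<^sup>9) = \<psi>(x\<^sup>3)\<^sup>4\<close> for a primitive cube root of unity \<open>\<omega>\<close>,
  and the 3-dissection \<open>\<psi>(x) = x \<psi>(x\<^sup>9) + f(x\<^sup>3, x\<^sup>6)\<close> turns the left-hand side into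
  \<open>((x \<psi>(x\<^sup>9))\<^sup>3 + f(x\<^sup>3, x\<^sup>6)\<^sup>3) \<psi>(x\<^sup>9)\<close>. Taken at \<open>x = q\<^bsup>1/3\<^esup>\<close> and at \<open>x = q\<close>, these two
  relations express \<open>V(q)\<^sup>3\<close> as a rational function of \<open>V(q\<^sup>3)\<close>.
\<close>

definition qpoch :: "'a::comm_ring_1 \<Rightarrow> 'a \<Rightarrow> nat \<Rightarrow> 'a" where
  "qpoch a q n = (\<Prod>i<n. 1 - a * q ^ i)"

lemma qpoch_0 [simp]: "qpoch a q 0 = 1"
  by (simp add: qpoch_def)

lemma qpoch_Suc: "qpoch a q (Suc n) = qpoch a q n * (1 - a * q ^ n)"
  by (simp add: qpoch_def)

lemma qpoch_Suc_shift: "qpoch a q (Suc n) = (1 - a) * qpoch (a * q) q n"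
  unfolding qpoch_def by (subst prod.lessThan_Suc_shift) (simp add: mult.assoc power_commutes)

lemma qpoch_add: "qpoch a q (m + n) = qpoch a q m * qpoch (a * q ^ m) q n"
  by (induction n) (simp_all add: qpoch_Suc mult_ac power_add)

lemma qpoch_square: "qpoch (q\<^sup>2) (q\<^sup>2) n = qpoch q q n * qpoch (-q) q n"
  unfolding qpoch_def prod.distrib[symmetric]
  by (rule prod.cong) (simp_all add: power2_eq_square power_mult_distrib algebra_simps power_mult)

lemma qpoch_pos:
  fixes a q :: real
  assumes "\<bar>a\<bar> < 1" "\<bar>q\<bar> \<le> 1"
  shows "qpoch a q n > 0"
  unfolding qpoch_def
proof (intro prod_pos)
  fix i
  have "\<bar>a * q ^ i\<bar> \<le> \<bar>a\<bar>"
    using assms by (simp add: abs_mult power_abs mult_left_le power_le_one)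
  then show "0 < 1 - a * q ^ i"
    using assms by (simp add: abs_le_iff)
qed

lemma norm_qpoch_ge:
  fixes a q :: "'a::real_normed_field"
  assumes "norm a \<le> 1" "norm q \<le> 1"
  shows "qpoch (norm a) (norm q) n \<le> norm (qpoch a q n)"
  unfolding qpoch_def prod_norm[symmetric]
proof (rule prod_mono, safe)
  fix i
  have "norm a * norm q ^ i \<le> 1"
    using assms by (simp add: mult_le_one power_le_one)
  then show "0 \<le> 1 - norm a * norm q ^ i" by simp
  have "norm (1::'a) - norm (a * q ^ i) \<le> norm (1 - a * q ^ i)"
    by (rule norm_triangle_ineq2)
  then show "1 - norm a * norm q ^ i \<le> norm (1 - a * q ^ i)"
    by (simp add: norm_mult norm_power)
qed

lemma qpoch_nonzero:
  fixes a q :: "'a::real_normed_field"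
  assumes "norm a < 1" "norm q \<le> 1"
  shows "qpoch a q n \<noteq> 0"
  using norm_qpoch_ge[of a q n] qpoch_pos[of "norm a" "norm q" n] assms by auto

lemma prod_one_plus_geometric_le_exp:
  fixes c r :: real
  assumes "0 \<le> c" "0 \<le> r" "r < 1"
  shows "(\<Prod>i<n. 1 + c * r ^ i) \<le> exp (c / (1 - r))"
proof -
  have "(\<Sum>i<n. r ^ i) \<le> 1 / (1 - r)"
    using assms by (simp add: sum_gp_strict divide_right_mono)
  then have "c * (\<Sum>i<n. r ^ i) \<le> c / (1 - r)"
    using mult_left_mono assms(1) by fastforce
  have "(\<Prod>i<n. 1 + c * r ^ i) \<le> (\<Prod>i<n. exp (c * r ^ i))"
    by (intro prod_mono) (use assms in auto)
  also have "\<dots> = exp (c * (\<Sum>i<n. r ^ i))"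
    by (simp add: exp_sum sum_distrib_left)
  also have "\<dots> \<le> exp (c / (1 - r))"
    using \<open>c * (\<Sum>i<n. r ^ i) \<le> c / (1 - r)\<close> by simp
  finally show ?thesis .
qed

lemma norm_qpoch_minus_one_le:
  fixes a q :: "'a::real_normed_field"
  assumes "norm q < 1"
  shows "norm (qpoch a q n - 1) \<le> exp (norm a / (1 - norm q)) - 1"
proof -
  have "norm (qpoch a q n - 1) \<le> (\<Prod>i<n. 1 + norm (- a * q ^ i)) - 1"
    using norm_prod_minus1_le_prod_minus1[of "\<lambda>i. - a * q ^ i" "{..<n}"]
    by (simp add: qpoch_def)
  also have "(\<Prod>i<n. 1 + norm (- a * q ^ i)) = (\<Prod>i<n. 1 + norm a * norm q ^ i)"
    by (simp add: norm_mult norm_power)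
  also have "\<dots> \<le> exp (norm a / (1 - norm q))"
    using prod_one_plus_geometric_le_exp[of "norm a" "norm q" n] assms by simp
  finally show ?thesis by simp
qed

lemma norm_qpoch_le:
  fixes a q :: "'a::real_normed_field"
  assumes "norm q < 1"
  shows "norm (qpoch a q n) \<le> exp (norm a / (1 - norm q))"
  using norm_qpoch_minus_one_le[OF assms, of a n] norm_triangle_ineq2[of "qpoch a q n" 1] by simp

lemma Suc_mult_div_2: "Suc i * i div 2 = i + i * (i - 1) div 2"
  by (cases i) (simp_all add: algebra_simps)

lemma qbinom_sum_drop_last:
  fixes y :: "'a::field"
  assumes nz: "\<And>m. qpoch y y m \<noteq> 0"
  shows "(\<Sum>j\<le>Suc n. c j * (1 - y ^ (Suc n - j)) / (qpoch y y j * qpoch y y (Suc n - j)))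
       = (\<Sum>j\<le>n. c j / (qpoch y y j * qpoch y y (n - j)))"
proof -
  have "c j * (1 - y ^ (Suc n - j)) / (qpoch y y j * qpoch y y (Suc n - j))
      = c j / (qpoch y y j * qpoch y y (n - j))" if "j \<le> n" for j
  proof -
    have "Suc n - j = Suc (n - j)" using that by simp
    moreover have "1 - y ^ Suc (n - j) \<noteq> 0"
      using nz[of "Suc (n - j)"] by (auto simp: qpoch_Suc)
    ultimately show ?thesis
      using nz[of j] nz[of "n - j"] by (simp add: qpoch_Suc field_simps)
  qed
  then show ?thesis by (simp add: sum.atMost_Suc)
qed

lemma qbinom_sum_shift:
  fixes y z :: "'a::field"
  assumes nz: "\<And>m. qpoch y y m \<noteq> 0"
  defines "c j \<equiv> y ^ (j * (j - 1) div 2) * z ^ j"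
  shows "(\<Sum>j\<le>Suc n. c j * (y ^ (Suc n - j) * (1 - y ^ j)) / (qpoch y y j * qpoch y y (Suc n - j)))
       = z * y ^ n * (\<Sum>j\<le>n. c j / (qpoch y y j * qpoch y y (n - j)))"
proof -
  have shifted_term: "c (Suc i) * (y ^ (n - i) * (1 - y ^ Suc i)) / (qpoch y y (Suc i) * qpoch y y (n - i))
      = z * y ^ n * (c i / (qpoch y y i * qpoch y y (n - i)))" if "i \<le> n" for i
  proof -
    have "Suc i * i div 2 + (n - i) = n + i * (i - 1) div 2"
      using that Suc_mult_div_2[of i] by simp
    then have "y ^ (Suc i * i div 2) * y ^ (n - i) = y ^ n * y ^ (i * (i - 1) div 2)"
      by (metis power_add)
    then have "c (Suc i) * y ^ (n - i) = z * y ^ n * c i"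
      unfolding c_def by (simp add: mult_ac)
    moreover have "1 - y ^ Suc i \<noteq> 0"
      using nz[of "Suc i"] by (auto simp: qpoch_Suc)
    ultimately show ?thesis
      using nz[of i] nz[of "n - i"] by (simp add: qpoch_Suc field_simps)
  qed
  have "(\<Sum>j\<le>Suc n. c j * (y ^ (Suc n - j) * (1 - y ^ j)) / (qpoch y y j * qpoch y y (Suc n - j)))
      = (\<Sum>i\<le>n. c (Suc i) * (y ^ (n - i) * (1 - y ^ Suc i)) / (qpoch y y (Suc i) * qpoch y y (n - i)))"
    by (subst sum.atMost_Suc_shift) simp
  also have "\<dots> = (\<Sum>i\<le>n. z * y ^ n * (c i / (qpoch y y i * qpoch y y (n - i))))"
    using shifted_term by (intro sum.cong) auto
  finally show ?thesis
    by (simp add: sum_distrib_left)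
qed

lemma qpoch_qbinomial:
  fixes y z :: "'a::field"
  assumes nz: "\<And>m. qpoch y y m \<noteq> 0"
  shows "qpoch (-z) y n
       = qpoch y y n * (\<Sum>j\<le>n. y ^ (j * (j - 1) div 2) * z ^ j / (qpoch y y j * qpoch y y (n - j)))"
proof (induction n)
  case 0
  then show ?case by simp
next
  case (Suc n)
  define c where "c j = y ^ (j * (j - 1) div 2) * z ^ j" for j
  define S where "S n = (\<Sum>j\<le>n. c j / (qpoch y y j * qpoch y y (n - j)))" for n
  have "(1 - y ^ Suc n) * S (Suc n)
      = (\<Sum>j\<le>Suc n. c j * (1 - y ^ (Suc n - j)) / (qpoch y y j * qpoch y y (Suc n - j)))
      + (\<Sum>j\<le>Suc n. c j * (y ^ (Suc n - j) * (1 - y ^ j)) / (qpoch y y j * qpoch y y (Suc n - j)))"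
    unfolding S_def sum_distrib_left sum.distrib[symmetric]
  proof (rule sum.cong[OF refl])
    fix j assume "j \<in> {..Suc n}"
    then have "y ^ (Suc n - j) * y ^ j = y ^ Suc n"
      by (simp add: power_add[symmetric])
    then have "1 - y ^ Suc n = (1 - y ^ (Suc n - j)) + y ^ (Suc n - j) * (1 - y ^ j)"
      by (simp add: algebra_simps)
    then show "(1 - y ^ Suc n) * (c j / (qpoch y y j * qpoch y y (Suc n - j)))
             = c j * (1 - y ^ (Suc n - j)) / (qpoch y y j * qpoch y y (Suc n - j))
             + c j * (y ^ (Suc n - j) * (1 - y ^ j)) / (qpoch y y j * qpoch y y (Suc n - j))"
      by (simp add: add_divide_distrib[symmetric] ring_distribs)
  qed
  also have "\<dots> = (1 + z * y ^ n) * S n"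
    unfolding qbinom_sum_drop_last[OF nz] qbinom_sum_shift[OF nz] S_def c_def
    by (simp add: algebra_simps)
  finally have "(1 - y ^ Suc n) * S (Suc n) = (1 + z * y ^ n) * S n" .
  moreover have "qpoch (-z) y (Suc n) = qpoch y y n * S n * (1 + z * y ^ n)"
    using Suc by (simp add: qpoch_Suc S_def c_def)
  ultimately show ?case
    by (simp add: qpoch_Suc S_def c_def mult_ac)
qed

lemma prod_qbinomial_homogeneous:
  fixes y u v :: "'a::field"
  assumes nz: "\<And>m. qpoch y y m \<noteq> 0" and u: "u \<noteq> 0"
  shows "(\<Prod>i<N. u + v * y ^ i)
       = qpoch y y N * (\<Sum>j\<le>N. y ^ (j * (j - 1) div 2) * u ^ (N - j) * v ^ j
                                / (qpoch y y j * qpoch y y (N - j)))"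
proof -
  have "(\<Prod>i<N. u + v * y ^ i) = (\<Prod>i<N. u * (1 - (-(v / u)) * y ^ i))"
    using u by (intro prod.cong) (simp_all add: field_simps)
  also have "\<dots> = u ^ N * qpoch (-(v / u)) y N"
    unfolding qpoch_def by (simp add: prod.distrib)
  also have "\<dots> = qpoch y y N * (\<Sum>j\<le>N. u ^ N * (y ^ (j * (j - 1) div 2) * (v / u) ^ j
                                             / (qpoch y y j * qpoch y y (N - j))))"
    by (subst qpoch_qbinomial[OF nz]) (simp add: sum_distrib_left mult_ac)
  also have "(\<Sum>j\<le>N. u ^ N * (y ^ (j * (j - 1) div 2) * (v / u) ^ j / (qpoch y y j * qpoch y y (N - j))))
      = (\<Sum>j\<le>N. y ^ (j * (j - 1) div 2) * u ^ (N - j) * v ^ j / (qpoch y y j * qpoch y y (N - j)))"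
  proof (rule sum.cong[OF refl])
    fix j assume "j \<in> {..N}"
    then have "u ^ N = u ^ (N - j) * u ^ j" by (simp add: power_add[symmetric])
    then show "u ^ N * (y ^ (j * (j - 1) div 2) * (v / u) ^ j / (qpoch y y j * qpoch y y (N - j)))
             = y ^ (j * (j - 1) div 2) * u ^ (N - j) * v ^ j / (qpoch y y j * qpoch y y (N - j))"
      using u by (simp add: power_divide field_simps)
  qed
  finally show ?thesis .
qed

lemma inverse_qpoch_le_exp:
  fixes p :: real
  assumes "0 \<le> p" "p < 1"
  shows "1 / qpoch p p n \<le> exp (p / (1 - p)\<^sup>2)"
proof -
  have factor: "1 / (1 - p ^ Suc i) \<le> exp (p ^ Suc i / (1 - p))" for i
  proof -
    have x: "0 \<le> p ^ Suc i" "p ^ Suc i \<le> p"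
      using assms by (simp_all add: power_le_one mult_left_le)
    then have "1 / (1 - p ^ Suc i) = 1 + p ^ Suc i / (1 - p ^ Suc i)"
      using assms by (simp add: field_simps)
    also have "\<dots> \<le> exp (p ^ Suc i / (1 - p ^ Suc i))"
      by (rule exp_ge_add_one_self)
    also have "\<dots> \<le> exp (p ^ Suc i / (1 - p))"
      using x assms by (simp add: frac_le)
    finally show ?thesis .
  qed
  have "1 / qpoch p p n = (\<Prod>i<n. 1 / (1 - p ^ Suc i))"
    by (simp add: qpoch_def prod_dividef)
  also have "\<dots> \<le> (\<Prod>i<n. exp (p ^ Suc i / (1 - p)))"
    using assms by (intro prod_mono conjI factor) (simp add: power_le_one mult_le_one)
  also have "\<dots> = exp ((\<Sum>i<n. p ^ Suc i) / (1 - p))"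
    by (simp add: exp_sum sum_divide_distrib)
  also have "\<dots> \<le> exp (p / (1 - p)\<^sup>2)"
  proof -
    have "(\<Sum>i<n. p ^ Suc i) = p * (1 - p ^ n) / (1 - p)"
      using assms by (simp add: sum_distrib_left[symmetric] sum_gp_strict)
    also have "\<dots> \<le> p / (1 - p)"
      using assms by (intro divide_right_mono) (simp_all add: mult_left_le)
    finally have "(\<Sum>i<n. p ^ Suc i) / (1 - p) \<le> p / (1 - p) / (1 - p)"
      using assms by (intro divide_right_mono) auto
    then show ?thesis
      by (simp add: power2_eq_square)
  qed
  finally show ?thesis .
qed

lemma inverse_norm_qpoch_le_exp:
  fixes y :: "'a::real_normed_field"
  assumes "norm y < 1"
  shows "1 / norm (qpoch y y n) \<le> exp (norm y / (1 - norm y)\<^sup>2)"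
proof -
  have "qpoch (norm y) (norm y) n > 0"
    using assms by (intro qpoch_pos) auto
  moreover have "qpoch (norm y) (norm y) n \<le> norm (qpoch y y n)"
    using assms by (intro norm_qpoch_ge) auto
  ultimately have "1 / norm (qpoch y y n) \<le> 1 / qpoch (norm y) (norm y) n"
    by (intro divide_left_mono mult_pos_pos) auto
  also have "\<dots> \<le> exp (norm y / (1 - norm y)\<^sup>2)"
    using assms by (intro inverse_qpoch_le_exp) auto
  finally show ?thesis .
qed

text \<open>Euler's series for \<open>1 / (z; p)\<^sub>\<infinity>\<close>.\<close>

definition qexp :: "real \<Rightarrow> real \<Rightarrow> real" where
  "qexp p z = (\<Sum>n. z ^ n / qpoch p p n)"

lemma summable_qexp_abs:
  fixes p z :: real
  assumes p: "\<bar>p\<bar> < 1" and z: "\<bar>z\<bar> < 1"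
  shows "summable (\<lambda>n. \<bar>z ^ n / qpoch p p n\<bar>)"
proof (rule summable_comparison_test')
  show "summable (\<lambda>n. exp (\<bar>p\<bar> / (1 - \<bar>p\<bar>)\<^sup>2) * \<bar>z\<bar> ^ n)"
    using z by (intro summable_mult summable_geometric) simp
  fix n
  have "\<bar>z ^ n / qpoch p p n\<bar> = \<bar>z\<bar> ^ n * (1 / \<bar>qpoch p p n\<bar>)"
    by (simp add: power_abs)
  also have "\<dots> \<le> \<bar>z\<bar> ^ n * exp (\<bar>p\<bar> / (1 - \<bar>p\<bar>)\<^sup>2)"
    using inverse_norm_qpoch_le_exp[of p n] p by (intro mult_left_mono) auto
  finally show "norm \<bar>z ^ n / qpoch p p n\<bar> \<le> exp (\<bar>p\<bar> / (1 - \<bar>p\<bar>)\<^sup>2) * \<bar>z\<bar> ^ n"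
    by (simp add: mult.commute)
qed

lemma summable_qexp:
  fixes p z :: real
  assumes "\<bar>p\<bar> < 1" "\<bar>z\<bar> < 1"
  shows "summable (\<lambda>n. z ^ n / qpoch p p n)"
  using summable_qexp_abs[OF assms] by (rule summable_rabs_cancel)

lemma abs_mult_power_less_1:
  fixes p z :: real
  assumes "\<bar>p\<bar> < 1" "\<bar>z\<bar> < 1"
  shows "\<bar>z * p ^ m\<bar> < 1"
proof -
  have "\<bar>z\<bar> * \<bar>p\<bar> ^ m \<le> \<bar>z\<bar>"
    using assms by (simp add: mult_left_le power_le_one)
  then show ?thesis
    using assms by (simp add: abs_mult power_abs)
qed

lemma qexp_shift:
  assumes p: "\<bar>p\<bar> < 1" and z: "\<bar>z\<bar> < 1"
  shows "qexp p z * (1 - z) = qexp p (z * p)"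
proof -
  define f where "f n = z ^ n / qpoch p p n" for n
  define g where "g n = (z * p) ^ n / qpoch p p n" for n
  have zp: "\<bar>z * p\<bar> < 1"
    using abs_mult_power_less_1[OF p z, of 1] by simp
  have f: "f sums qexp p z" and g: "g sums qexp p (z * p)"
    unfolding f_def g_def qexp_def using summable_qexp[OF p z] summable_qexp[OF p zp]
    by (simp_all add: summable_sums)
  have fg: "g (Suc n) = f (Suc n) - z * f n" for n
  proof -
    have "qpoch p p n > 0" "1 - p ^ Suc n > 0"
      using qpoch_pos[of p p n] qpoch_pos[of p p "Suc n"] p
      by (simp_all add: qpoch_Suc zero_less_mult_iff)
    then show ?thesis
      unfolding f_def g_def by (simp add: qpoch_Suc field_simps power_mult_distrib)
  qed
  have "(\<lambda>n. f (Suc n)) sums (qexp p z - 1)"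
    using f by (subst sums_Suc_iff) (simp add: f_def)
  then have "(\<lambda>n. g (Suc n)) sums (qexp p z - 1 - z * qexp p z)"
    unfolding fg using f by (intro sums_diff sums_mult)
  moreover have "(\<lambda>n. g (Suc n)) sums (qexp p (z * p) - 1)"
    using g by (subst sums_Suc_iff) (simp add: g_def)
  ultimately have "qexp p (z * p) - 1 = qexp p z - 1 - z * qexp p z"
    by (rule sums_unique2[symmetric])
  then show ?thesis by (simp add: algebra_simps)
qed

lemma qexp_mult_qpoch:
  assumes p: "\<bar>p\<bar> < 1" and z: "\<bar>z\<bar> < 1"
  shows "qexp p z * qpoch z p m = qexp p (z * p ^ m)"
proof (induction m)
  case (Suc m)
  have "qexp p z * qpoch z p (Suc m) = qexp p (z * p ^ m) * (1 - z * p ^ m)"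
    using Suc by (simp add: qpoch_Suc mult.assoc[symmetric])
  also have "\<dots> = qexp p (z * p ^ Suc m)"
    using qexp_shift[OF p abs_mult_power_less_1[OF p z]] by (simp add: mult_ac)
  finally show ?case .
qed simp

lemma abs_qexp_minus_one_le:
  assumes p: "\<bar>p\<bar> < 1" and w: "\<bar>w\<bar> < 1"
  shows "\<bar>qexp p w - 1\<bar> \<le> exp (\<bar>p\<bar> / (1 - \<bar>p\<bar>)\<^sup>2) * (\<bar>w\<bar> / (1 - \<bar>w\<bar>))"
proof -
  define B where "B = exp (\<bar>p\<bar> / (1 - \<bar>p\<bar>)\<^sup>2)"
  have sa: "summable (\<lambda>n. \<bar>w ^ Suc n / qpoch p p (Suc n)\<bar>)"
    using summable_qexp_abs[OF p w] by (rule summable_Suc_iff[THEN iffD2])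
  have geom: "(\<lambda>n. B * \<bar>w\<bar> ^ Suc n) sums (B * (\<bar>w\<bar> / (1 - \<bar>w\<bar>)))"
  proof -
    have "(\<lambda>n. \<bar>w\<bar> ^ n) sums (1 / (1 - \<bar>w\<bar>))"
      using w by (intro geometric_sums) auto
    then have "(\<lambda>n. \<bar>w\<bar> ^ Suc n) sums (1 / (1 - \<bar>w\<bar>) - 1)"
      by (subst sums_Suc_iff) simp
    moreover have "1 / (1 - \<bar>w\<bar>) - 1 = \<bar>w\<bar> / (1 - \<bar>w\<bar>)"
      using w by (simp add: field_simps)
    ultimately show ?thesis by (metis sums_mult)
  qed
  have "qexp p w - 1 = (\<Sum>n. w ^ Suc n / qpoch p p (Suc n))"
    unfolding qexp_def using suminf_split_head[OF summable_qexp[OF p w]] by simp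
  then have "\<bar>qexp p w - 1\<bar> \<le> (\<Sum>n. \<bar>w ^ Suc n / qpoch p p (Suc n)\<bar>)"
    using summable_rabs[OF sa] by simp
  also have "\<dots> \<le> (\<Sum>n. B * \<bar>w\<bar> ^ Suc n)"
  proof (rule suminf_le[OF _ sa sums_summable[OF geom]])
    fix n
    have "\<bar>w ^ Suc n / qpoch p p (Suc n)\<bar> = \<bar>w\<bar> ^ Suc n * (1 / \<bar>qpoch p p (Suc n)\<bar>)"
      by (simp add: abs_mult power_abs)
    also have "\<dots> \<le> \<bar>w\<bar> ^ Suc n * B"
      unfolding B_def using inverse_norm_qpoch_le_exp[of p] p by (intro mult_left_mono) auto
    finally show "\<bar>w ^ Suc n / qpoch p p (Suc n)\<bar> \<le> B * \<bar>w\<bar> ^ Suc n"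
      by (simp add: mult.commute)
  qed
  also have "\<dots> = B * (\<bar>w\<bar> / (1 - \<bar>w\<bar>))"
    using geom by (simp add: sums_iff)
  finally show ?thesis unfolding B_def .
qed

lemma qexp_nonzero:
  assumes p: "\<bar>p\<bar> < 1" and z: "\<bar>z\<bar> < 1"
  shows "qexp p z \<noteq> 0"
proof
  assume "qexp p z = 0"
  then have zero: "qexp p (z * p ^ m) = 0" for m
    using qexp_mult_qpoch[OF p z, of m] by simp
  define B where "B = exp (\<bar>p\<bar> / (1 - \<bar>p\<bar>)\<^sup>2)"
  have "(\<lambda>m. z * p ^ m) \<longlonglongrightarrow> 0"
    using p by (intro tendsto_mult_right_zero LIMSEQ_power_zero) auto
  then have "(\<lambda>m. B * (\<bar>z * p ^ m\<bar> / (1 - \<bar>z * p ^ m\<bar>))) \<longlonglongrightarrow> B * (\<bar>0\<bar> / (1 - \<bar>0\<bar>))"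
    by (intro tendsto_intros) auto
  then have lim: "(\<lambda>m. B * (\<bar>z * p ^ m\<bar> / (1 - \<bar>z * p ^ m\<bar>))) \<longlonglongrightarrow> 0"
    by simp
  have "norm (qexp p (z * p ^ m) - 1) \<le> B * (\<bar>z * p ^ m\<bar> / (1 - \<bar>z * p ^ m\<bar>))" for m
    unfolding B_def real_norm_def by (rule abs_qexp_minus_one_le[OF p abs_mult_power_less_1[OF p z]])
  then have "(\<lambda>m. qexp p (z * p ^ m) - 1) \<longlonglongrightarrow> 0"
    by (intro Lim_null_comparison[OF always_eventually lim] allI)
  then show False
    using zero LIMSEQ_const_iff[of "-1::real" 0] by simp
qed

lemma qpoch_tendsto_nonzero:
  fixes y :: "'a::{real_normed_field,banach}"
  assumes y: "norm y < 1"
  obtains P where "(\<lambda>n. qpoch y y n) \<longlonglongrightarrow> P" "P \<noteq> 0"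
proof -
  define B where "B = exp (norm y / (1 - norm y))"
  define d where "d n = qpoch y y (Suc n) - qpoch y y n" for n
  have bound: "norm (d n) \<le> B * norm y ^ n" for n
  proof -
    have "norm (d n) = norm (qpoch y y n) * (norm y * norm y ^ n)"
      by (simp add: d_def qpoch_Suc algebra_simps norm_mult norm_power)
    also have "\<dots> \<le> B * (1 * norm y ^ n)"
      unfolding B_def using y by (intro mult_mono norm_qpoch_le) auto
    finally show ?thesis by simp
  qed
  have "summable (\<lambda>n. B * norm y ^ n)"
    using y by (intro summable_mult summable_geometric) simp
  then have "summable d"
    using bound by (rule summable_comparison_test')
  moreover have "qpoch y y n = 1 + (\<Sum>i<n. d i)" for n
    unfolding d_def sum_lessThan_telescope by simp
  ultimately have lim: "(\<lambda>n. qpoch y y n) \<longlonglongrightarrow> 1 + suminf d"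
    by (simp add: summable_LIMSEQ tendsto_add)
  have "1 / exp (norm y / (1 - norm y)\<^sup>2) \<le> norm (qpoch y y n)" for n
  proof -
    have "norm (qpoch y y n) > 0"
      using qpoch_nonzero[of y y n] y by simp
    with inverse_norm_qpoch_le_exp[OF y, of n] show ?thesis
      by (simp add: divide_le_eq mult.commute)
  qed
  then have "1 / exp (norm y / (1 - norm y)\<^sup>2) \<le> norm (1 + suminf d)"
    by (intro tendsto_lowerbound[OF tendsto_norm[OF lim]] always_eventually allI) auto
  then have "1 + suminf d \<noteq> 0"
    by auto
  with lim show ?thesis using that by blast
qed

lemma cf_numerator_ge: "(q::real) ^ k + q ^ (2 * k) \<ge> - 1/4"
proof -
  have "q ^ (2 * k) = q ^ k * q ^ k"
    by (simp add: mult_2 power_add)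
  moreover have "(q ^ k + 1/2)\<^sup>2 = q ^ k * q ^ k + q ^ k + 1/4"
    by (simp add: power2_eq_square algebra_simps)
  moreover have "0 \<le> (q ^ k + 1/2)\<^sup>2"
    by simp
  ultimately show ?thesis
    by linarith
qed

lemma cf_tail_ge: "cf_tail q k n \<ge> 1/2"
proof (induction n arbitrary: k)
  case (Suc n)
  define a where "a = q ^ k + q ^ (2 * k)"
  define c where "c = cf_tail q (Suc k) n"
  have c: "c \<ge> 1/2" and a: "a \<ge> -1/4"
    unfolding c_def a_def by (rule Suc.IH, rule cf_numerator_ge)
  have "a / c \<ge> -1/2"
  proof (cases "a \<ge> 0")
    case True
    then have "a / c \<ge> 0"
      using c by simp
    then show ?thesis
      by linarith
  next
    case False
    have "a * (2 * c - 1) \<le> 0"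
      using False c by (intro mult_nonpos_nonneg) auto
    then have "2 * a * c \<le> a"
      by (simp add: algebra_simps)
    then have "2 * a \<le> a / c"
      using c by (simp add: pos_le_divide_eq)
    then show ?thesis
      using a by linarith
  qed
  moreover have "cf_tail q k (Suc n) = 1 + a / c"
    unfolding a_def c_def by simp
  ultimately show ?case
    by linarith
qed simp

lemma cf_tail_Suc_Suc:
  "cf_tail q (Suc k) (Suc n) = 1 + (q ^ Suc k + q ^ (2 * Suc k)) / cf_tail q (Suc (Suc k)) n"
  by simp

lemma abs_cf_numerator_le:
  fixes q :: real
  assumes "\<bar>q\<bar> \<le> 1"
  shows "\<bar>q ^ m + q ^ (2 * m)\<bar> \<le> 2 * \<bar>q\<bar> ^ m"
proof -
  have "\<bar>q\<bar> ^ (2 * m) \<le> \<bar>q\<bar> ^ m"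
    using assms by (intro power_decreasing) auto
  then show ?thesis
    using abs_triangle_ineq[of "q ^ m" "q ^ (2 * m)"] by (simp add: power_abs)
qed

lemma cf_tail_close:
  fixes q :: real and S :: "nat \<Rightarrow> real"
  assumes q: "\<bar>q\<bar> < 1"
    and rec: "\<And>k. k \<ge> K \<Longrightarrow> S k = 1 + (q ^ Suc k + q ^ (2 * Suc k)) / S (Suc k)"
    and near: "\<And>k. k \<ge> K \<Longrightarrow> \<bar>S k - 1\<bar> \<le> 1/2"
    and small: "\<And>k. k \<ge> K \<Longrightarrow> \<bar>q\<bar> ^ Suc k \<le> 1/16"
    and k: "k \<ge> K"
  shows "\<bar>cf_tail q (Suc k) n - S k\<bar> \<le> (1/2) ^ n / 2"
  using k
proof (induction n arbitrary: k)
  case 0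
  then show ?case using near[of k] by (simp add: abs_minus_commute)
next
  case (Suc n)
  define a where "a = q ^ Suc k + q ^ (2 * Suc k)"
  define c where "c = cf_tail q (Suc (Suc k)) n"
  define S' where "S' = S (Suc k)"
  have c: "c \<ge> 1/2" unfolding c_def by (rule cf_tail_ge)
  have "\<bar>S' - 1\<bar> \<le> 1/2"
    using near[of "Suc k"] Suc.prems unfolding S'_def by simp
  then have S': "S' \<ge> 1/2"
    using abs_le_D2[of "S' - 1"] by linarith
  have a: "\<bar>a\<bar> \<le> 1/8"
    using abs_cf_numerator_le[of q "Suc k"] small[OF Suc.prems] q unfolding a_def by simp
  have IH: "\<bar>S' - c\<bar> \<le> (1/2) ^ n / 2"
    using Suc.IH[of "Suc k"] Suc.prems unfolding c_def S'_def by (simp add: abs_minus_commute)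
  have "cf_tail q (Suc k) (Suc n) - S k = (1 + a / c) - (1 + a / S')"
    using rec[OF Suc.prems] unfolding a_def c_def S'_def by simp
  also have "\<dots> = a * (S' - c) / (c * S')"
    using c S' by (simp add: field_simps)
  also have "\<bar>\<dots>\<bar> = \<bar>a\<bar> * \<bar>S' - c\<bar> / (c * S')"
    using c S' by (simp add: abs_mult)
  also have "\<dots> \<le> \<bar>a\<bar> * \<bar>S' - c\<bar> / (1/4)"
    using mult_mono[OF c S'] c by (intro divide_left_mono) auto
  also have "\<dots> \<le> (1/8) * ((1/2) ^ n / 2) / (1/4)"
    using a IH by (intro divide_right_mono mult_mono) auto
  finally show ?case by simp
qed

lemma cf_tail_tendsto_step:
  fixes q :: real and G :: "nat \<Rightarrow> real"
  assumes rec: "G k = G (Suc k) + (q ^ Suc k + q ^ (2 * Suc k)) * G (Suc (Suc k))"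
    and nz: "G (Suc k) \<noteq> 0" "G (Suc (Suc k)) \<noteq> 0"
    and lim: "(\<lambda>n. cf_tail q (Suc (Suc k)) n) \<longlonglongrightarrow> G (Suc k) / G (Suc (Suc k))"
  shows "G k \<noteq> 0 \<and> (\<lambda>n. cf_tail q (Suc k) n) \<longlonglongrightarrow> G k / G (Suc k)"
proof -
  define a where "a = q ^ Suc k + q ^ (2 * Suc k)"
  have "G (Suc k) / G (Suc (Suc k)) \<ge> 1/2"
    by (rule tendsto_lowerbound[OF lim], intro always_eventually allI cf_tail_ge, simp)
  then have "(\<lambda>n. 1 + a / cf_tail q (Suc (Suc k)) n) \<longlonglongrightarrow> 1 + a / (G (Suc k) / G (Suc (Suc k)))"
    by (intro tendsto_intros lim) auto
  also have "1 + a / (G (Suc k) / G (Suc (Suc k))) = G k / G (Suc k)"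
    using nz by (simp add: rec a_def field_simps)
  finally have "(\<lambda>n. cf_tail q (Suc k) (Suc n)) \<longlonglongrightarrow> G k / G (Suc k)"
    unfolding a_def cf_tail_Suc_Suc .
  then have limG: "(\<lambda>n. cf_tail q (Suc k) n) \<longlonglongrightarrow> G k / G (Suc k)"
    by (rule LIMSEQ_imp_Suc)
  have "G k / G (Suc k) \<ge> 1/2"
    by (rule tendsto_lowerbound[OF limG], intro always_eventually allI cf_tail_ge, simp)
  then show ?thesis
    using limG by auto
qed

lemma cf_tail_tendsto_ratio_eventually:
  fixes q L :: real and G :: "nat \<Rightarrow> real"
  assumes q: "\<bar>q\<bar> < 1"
    and rec: "\<And>k. G k = G (Suc k) + (q ^ Suc k + q ^ (2 * Suc k)) * G (Suc (Suc k))"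
    and lim: "G \<longlonglongrightarrow> L" and L: "L \<noteq> 0"
  obtains K where
    "\<And>k. k \<ge> K \<Longrightarrow> G k \<noteq> 0 \<and> G (Suc k) \<noteq> 0 \<and> (\<lambda>n. cf_tail q (Suc k) n) \<longlonglongrightarrow> G k / G (Suc k)"
proof -
  define S where "S k = G k / G (Suc k)" for k
  have "S \<longlonglongrightarrow> L / L"
    unfolding S_def using L by (intro tendsto_divide lim LIMSEQ_Suc)
  then have "\<forall>\<^sub>F k in sequentially. dist (S k) 1 < 1/2"
    using L by (intro tendsto_iff[THEN iffD1, rule_format]) auto
  moreover have "\<forall>\<^sub>F k in sequentially. G k \<noteq> 0"
    by (rule tendsto_imp_eventually_ne[OF lim L])
  moreover have "\<forall>\<^sub>F k in sequentially. \<bar>q\<bar> ^ k < 1/16"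
    using q by (intro order_tendstoD(2)[OF LIMSEQ_power_zero]) auto
  ultimately have "\<forall>\<^sub>F k in sequentially. dist (S k) 1 < 1/2 \<and> G k \<noteq> 0 \<and> \<bar>q\<bar> ^ k < 1/16"
    by (intro eventually_conj)
  then obtain K where K: "\<And>k. k \<ge> K \<Longrightarrow> dist (S k) 1 < 1/2 \<and> G k \<noteq> 0 \<and> \<bar>q\<bar> ^ k < 1/16"
    unfolding eventually_sequentially by blast
  have near: "\<bar>S k - 1\<bar> \<le> 1/2" if "k \<ge> K" for k
    using K[OF that] by (simp add: dist_real_def)
  have small: "\<bar>q\<bar> ^ Suc k \<le> 1/16" if "k \<ge> K" for k
  proof -
    have "\<bar>q\<bar> ^ Suc k \<le> \<bar>q\<bar> ^ k"
      using q by (intro power_decreasing) auto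
    then show ?thesis using K[OF that] by linarith
  qed
  have Srec: "S k = 1 + (q ^ Suc k + q ^ (2 * Suc k)) / S (Suc k)" if "k \<ge> K" for k
  proof -
    have "G (Suc k) \<noteq> 0"
      using K[of "Suc k"] that by simp
    then have "S k = 1 + (q ^ Suc k + q ^ (2 * Suc k)) * G (Suc (Suc k)) / G (Suc k)"
      unfolding S_def by (simp add: rec[of k] add_divide_distrib)
    then show ?thesis
      by (simp add: S_def)
  qed
  have "G k \<noteq> 0 \<and> G (Suc k) \<noteq> 0 \<and> (\<lambda>n. cf_tail q (Suc k) n) \<longlonglongrightarrow> S k" if "k \<ge> K" for k
  proof -
    have "norm (cf_tail q (Suc k) n - S k) \<le> (1/2) ^ n / 2" for n
      using cf_tail_close[OF q Srec near small that] by simp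
    moreover have "(\<lambda>n. (1/2::real) ^ n / 2) \<longlonglongrightarrow> 0"
      by (intro tendsto_divide_zero LIMSEQ_power_zero) auto
    ultimately have "(\<lambda>n. cf_tail q (Suc k) n - S k) \<longlonglongrightarrow> 0"
      by (rule Lim_null_comparison[OF always_eventually[OF allI]])
    then show ?thesis
      using K[of k] K[of "Suc k"] that by (simp add: Lim_null[symmetric])
  qed
  then show ?thesis
    using that unfolding S_def by blast
qed

lemma cf_tail_tendsto_ratio:
  fixes q L :: real and G :: "nat \<Rightarrow> real"
  assumes q: "\<bar>q\<bar> < 1"
    and rec: "\<And>k. G k = G (Suc k) + (q ^ Suc k + q ^ (2 * Suc k)) * G (Suc (Suc k))"
    and lim: "G \<longlonglongrightarrow> L" and L: "L \<noteq> 0"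
  shows "G k \<noteq> 0 \<and> (\<lambda>n. cf_tail q (Suc k) n) \<longlonglongrightarrow> G k / G (Suc k)"
proof -
  obtain K where tail:
    "\<And>k. k \<ge> K \<Longrightarrow> G k \<noteq> 0 \<and> G (Suc k) \<noteq> 0 \<and> (\<lambda>n. cf_tail q (Suc k) n) \<longlonglongrightarrow> G k / G (Suc k)"
    using cf_tail_tendsto_ratio_eventually[OF q rec lim L] by blast
  have "G k \<noteq> 0 \<and> G (Suc k) \<noteq> 0 \<and> (\<lambda>n. cf_tail q (Suc k) n) \<longlonglongrightarrow> G k / G (Suc k)" for k
  proof (induction "K - k" arbitrary: k)
    case 0
    then show ?case by (intro tail) auto
  next
    case (Suc m)
    then have "G (Suc k) \<noteq> 0 \<and> G (Suc (Suc k)) \<noteq> 0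
        \<and> (\<lambda>n. cf_tail q (Suc (Suc k)) n) \<longlonglongrightarrow> G (Suc k) / G (Suc (Suc k))"
      by simp
    then show ?case
      using cf_tail_tendsto_step[OF rec] by blast
  qed
  then show ?thesis
    by simp
qed

definition cubic_F :: "real \<Rightarrow> real \<Rightarrow> real" where
  "cubic_F q x = (\<Sum>n. qpoch (-x) q (2 * n) * q ^ n / qpoch (q\<^sup>2) (q\<^sup>2) n)"

lemma abs_power2_less_1: "\<bar>q\<bar> < 1 \<Longrightarrow> \<bar>q\<^sup>2\<bar> < (1::real)"
  by (simp add: abs_square_less_1)

lemma summable_cubic_F_abs:
  fixes q x :: real
  assumes q: "\<bar>q\<bar> < 1"
  shows "summable (\<lambda>n. \<bar>qpoch (-x) q (2 * n) * q ^ n / qpoch (q\<^sup>2) (q\<^sup>2) n\<bar>)"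
proof (rule summable_comparison_test')
  define B where "B = exp (\<bar>x\<bar> / (1 - \<bar>q\<bar>))"
  show "summable (\<lambda>n. B * \<bar>\<bar>q\<bar> ^ n / qpoch (q\<^sup>2) (q\<^sup>2) n\<bar>)"
    using q by (intro summable_mult summable_qexp_abs abs_power2_less_1) auto
  fix n
  have "\<bar>qpoch (-x) q (2 * n)\<bar> \<le> B"
    unfolding B_def using norm_qpoch_le[of q "-x" "2 * n"] q by simp
  then have "\<bar>qpoch (-x) q (2 * n)\<bar> * \<bar>\<bar>q\<bar> ^ n / qpoch (q\<^sup>2) (q\<^sup>2) n\<bar>
           \<le> B * \<bar>\<bar>q\<bar> ^ n / qpoch (q\<^sup>2) (q\<^sup>2) n\<bar>"
    by (rule mult_right_mono) simp
  then show "norm \<bar>qpoch (-x) q (2 * n) * q ^ n / qpoch (q\<^sup>2) (q\<^sup>2) n\<bar>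
           \<le> B * \<bar>\<bar>q\<bar> ^ n / qpoch (q\<^sup>2) (q\<^sup>2) n\<bar>"
    by (simp add: abs_mult power_abs)
qed

lemma cubic_F_sums:
  fixes q x :: real
  assumes "\<bar>q\<bar> < 1"
  shows "(\<lambda>n. qpoch (-x) q (2 * n) * q ^ n / qpoch (q\<^sup>2) (q\<^sup>2) n) sums cubic_F q x"
  unfolding cubic_F_def by (rule summable_sums[OF summable_rabs_cancel[OF summable_cubic_F_abs[OF assms]]])

lemma cubic_F_term_recurrence:
  fixes q x :: real
  assumes q: "\<bar>q\<bar> < 1"
  defines "u y n \<equiv> qpoch (-y) q (2 * n) * q ^ n / qpoch (q\<^sup>2) (q\<^sup>2) n"
  shows "u x (Suc n) - u (x * q) (Suc n) = (x * q + (x * q)\<^sup>2) * u (x * q\<^sup>2) n"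
proof -
  define Q where "Q n = qpoch (q\<^sup>2) (q\<^sup>2) n" for n
  define P where "P = qpoch (-(x * q\<^sup>2)) q (2 * n)"
  have QS: "Q (Suc n) = Q n * (1 - q ^ (2 * Suc n))"
    unfolding Q_def by (simp add: qpoch_Suc power_mult[symmetric] power_add[symmetric])
  have Qpos: "Q m > 0" for m
    unfolding Q_def using q by (intro qpoch_pos) (simp_all add: abs_square_less_1 less_imp_le)
  then have nz: "1 - q ^ (2 * Suc n) \<noteq> 0" "Q n \<noteq> 0"
    using QS Qpos[of n] Qpos[of "Suc n"] by auto
  have A: "qpoch (-x) q (2 * Suc n) = (1 + x) * (1 + x * q) * P"
    unfolding P_def by (simp add: qpoch_Suc_shift power2_eq_square mult_ac)
  have "qpoch (-(x * q)) q (2 * Suc n) = (1 + x * q) * qpoch (-(x * q * q)) q (Suc (2 * n))"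
    using qpoch_Suc_shift[of "-(x * q)" q "Suc (2 * n)"] by simp
  then have B: "qpoch (-(x * q)) q (2 * Suc n) = (1 + x * q) * (P * (1 + x * q * q * q ^ (2 * n)))"
    unfolding P_def by (simp add: qpoch_Suc power2_eq_square mult.assoc)
  have "q ^ (2 * Suc n) = q * q * q ^ (2 * n)"
    by (simp add: power_add power_mult)
  then have num: "qpoch (-x) q (2 * Suc n) - qpoch (-(x * q)) q (2 * Suc n)
                = x * (1 + x * q) * (1 - q ^ (2 * Suc n)) * P"
    unfolding A B by (simp add: algebra_simps)
  have "u x (Suc n) - u (x * q) (Suc n)
      = (qpoch (-x) q (2 * Suc n) - qpoch (-(x * q)) q (2 * Suc n)) * q ^ Suc n / Q (Suc n)"
    unfolding u_def Q_def by (simp add: diff_divide_distrib left_diff_distrib)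
  also have "\<dots> = x * (1 + x * q) * (1 - q ^ (2 * Suc n)) * P * q ^ Suc n / (Q n * (1 - q ^ (2 * Suc n)))"
    unfolding num QS ..
  also have "\<dots> = (x * q + (x * q)\<^sup>2) * u (x * q\<^sup>2) n"
    unfolding u_def Q_def[symmetric] P_def using nz by (simp add: field_simps power2_eq_square)
  finally show ?thesis .
qed

lemma cubic_F_recurrence:
  fixes q x :: real
  assumes q: "\<bar>q\<bar> < 1"
  shows "cubic_F q x = cubic_F q (x * q) + (x * q + (x * q)\<^sup>2) * cubic_F q (x * q\<^sup>2)"
proof -
  define u where "u y n = qpoch (-y) q (2 * n) * q ^ n / qpoch (q\<^sup>2) (q\<^sup>2) n" for y n
  have su: "u y sums cubic_F q y" for y
    unfolding u_def using cubic_F_sums[OF q] .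
  have s1: "(\<lambda>n. u y (Suc n)) sums (cubic_F q y - 1)" for y
    using su[of y] by (subst sums_Suc_iff) (simp add: u_def)
  have "(\<lambda>n. u x (Suc n) - u (x * q) (Suc n)) sums ((x * q + (x * q)\<^sup>2) * cubic_F q (x * q\<^sup>2))"
    unfolding u_def cubic_F_term_recurrence[OF q] by (intro sums_mult su[unfolded u_def])
  moreover have "(\<lambda>n. u x (Suc n) - u (x * q) (Suc n)) sums ((cubic_F q x - 1) - (cubic_F q (x * q) - 1))"
    by (intro sums_diff s1)
  ultimately show ?thesis
    using sums_unique2 by fastforce
qed

lemma cubic_F_tendsto_qexp:
  fixes q :: real
  assumes q: "\<bar>q\<bar> < 1"
  shows "(\<lambda>k. cubic_F q (q ^ k)) \<longlonglongrightarrow> qexp (q\<^sup>2) q"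
proof -
  define Q where "Q n = qpoch (q\<^sup>2) (q\<^sup>2) n" for n
  define M where "M = (\<Sum>n. \<bar>\<bar>q\<bar> ^ n / Q n\<bar>)"
  have sM: "summable (\<lambda>n. \<bar>\<bar>q\<bar> ^ n / Q n\<bar>)"
    unfolding Q_def using q by (intro summable_qexp_abs abs_power2_less_1) auto
  have bound: "\<bar>cubic_F q x - qexp (q\<^sup>2) q\<bar> \<le> (exp (\<bar>x\<bar> / (1 - \<bar>q\<bar>)) - 1) * M" for x
  proof -
    define E where "E = exp (\<bar>x\<bar> / (1 - \<bar>q\<bar>)) - 1"
    have "(\<lambda>n. qpoch (-x) q (2 * n) * q ^ n / Q n - q ^ n / Q n) sums (cubic_F q x - qexp (q\<^sup>2) q)"
      unfolding Q_def qexp_def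
      by (rule sums_diff[OF cubic_F_sums[OF q] summable_sums[OF summable_qexp[OF abs_power2_less_1[OF q] q]]])
    then have diff: "(\<lambda>n. (qpoch (-x) q (2 * n) - 1) * (q ^ n / Q n)) sums (cubic_F q x - qexp (q\<^sup>2) q)"
      by (simp add: algebra_simps diff_divide_distrib)
    have term_bound: "norm ((qpoch (-x) q (2 * n) - 1) * (q ^ n / Q n)) \<le> E * \<bar>\<bar>q\<bar> ^ n / Q n\<bar>" for n
    proof -
      have "\<bar>qpoch (-x) q (2 * n) - 1\<bar> \<le> E"
        unfolding E_def using norm_qpoch_minus_one_le[of q "-x" "2 * n"] q by simp
      then have "\<bar>qpoch (-x) q (2 * n) - 1\<bar> * \<bar>\<bar>q\<bar> ^ n / Q n\<bar> \<le> E * \<bar>\<bar>q\<bar> ^ n / Q n\<bar>"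
        by (rule mult_right_mono) simp
      then show ?thesis
        by (simp add: abs_mult power_abs)
    qed
    have "\<bar>cubic_F q x - qexp (q\<^sup>2) q\<bar> = norm (\<Sum>n. (qpoch (-x) q (2 * n) - 1) * (q ^ n / Q n))"
      using diff by (simp add: sums_iff)
    also have "\<dots> \<le> (\<Sum>n. E * \<bar>\<bar>q\<bar> ^ n / Q n\<bar>)"
      by (rule norm_suminf_le[OF term_bound summable_mult[OF sM]])
    also have "\<dots> = E * M"
      unfolding M_def by (rule suminf_mult[OF sM])
    finally show ?thesis unfolding E_def .
  qed
  have "(\<lambda>k. (exp (\<bar>q ^ k\<bar> / (1 - \<bar>q\<bar>)) - 1) * M) \<longlonglongrightarrow> (exp (\<bar>0\<bar> / (1 - \<bar>q\<bar>)) - 1) * M"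
    using q by (intro tendsto_intros LIMSEQ_power_zero) auto
  then have lim: "(\<lambda>k. (exp (\<bar>q ^ k\<bar> / (1 - \<bar>q\<bar>)) - 1) * M) \<longlonglongrightarrow> 0"
    by simp
  have "(\<lambda>k. cubic_F q (q ^ k) - qexp (q\<^sup>2) q) \<longlonglongrightarrow> 0"
    by (rule Lim_null_comparison[OF always_eventually[OF allI] lim]) (simp add: bound)
  then show ?thesis
    by (simp add: Lim_null[symmetric])
qed

lemma summable_on_Times_of_iterated_abs:
  fixes t :: "nat \<Rightarrow> nat \<Rightarrow> real"
  assumes s1: "\<And>j. summable (\<lambda>m. \<bar>t j m\<bar>)" and s2: "summable (\<lambda>j. \<Sum>m. \<bar>t j m\<bar>)"
  shows "(\<lambda>(j, m). t j m) summable_on (UNIV \<times> UNIV)"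
proof (rule abs_summable_summable)
  have inner: "((\<lambda>m. \<bar>t j m\<bar>) has_sum (\<Sum>m. \<bar>t j m\<bar>)) UNIV" for j
    by (rule sums_nonneg_imp_has_sum) (use s1[of j] in \<open>auto simp: summable_sums\<close>)
  have "(\<lambda>j. \<Sum>m. \<bar>t j m\<bar>) summable_on UNIV"
    by (rule summable_nonneg_imp_summable_on[OF s2]) (use s1 in \<open>auto intro: suminf_nonneg\<close>)
  moreover have "infsum (\<lambda>m. \<bar>t j m\<bar>) UNIV = (\<Sum>m. \<bar>t j m\<bar>)" for j
    using inner[of j] by (rule infsumI)
  moreover have "norm (\<Sum>m. \<bar>t j m\<bar>) = (\<Sum>m. \<bar>t j m\<bar>)" for j
    using suminf_nonneg[OF s1[of j]] by simp
  ultimately show "(\<lambda>x. norm ((\<lambda>(j, m). t j m) x)) summable_on (UNIV \<times> UNIV)"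
    using inner by (subst Infinite_Sum.abs_summable_on_Sigma_iff) (auto simp: summable_on_def)
qed

lemma sums_antidiagonal:
  fixes t :: "nat \<Rightarrow> nat \<Rightarrow> real"
  assumes s1: "\<And>j. summable (\<lambda>m. \<bar>t j m\<bar>)" and s2: "summable (\<lambda>j. \<Sum>m. \<bar>t j m\<bar>)"
  shows "(\<lambda>n. \<Sum>j\<le>n. t j (n - j)) sums (\<Sum>j. \<Sum>m. t j m)"
proof -
  define F where "F = (\<lambda>(j, m). t j m)"
  obtain a where a: "(F has_sum a) (UNIV \<times> UNIV)"
    using summable_on_Times_of_iterated_abs[OF s1 s2] unfolding F_def summable_on_def by blast
  have "((\<lambda>m. t j m) has_sum (\<Sum>m. t j m)) UNIV" for j
    by (rule norm_summable_imp_has_sum) (use s1[of j] in \<open>auto intro: summable_sums summable_rabs_cancel\<close>)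
  then have "((\<lambda>j. \<Sum>m. t j m) has_sum a) UNIV"
    by (intro has_sum_Sigma'[OF a]) (auto simp: F_def)
  then have rows: "a = (\<Sum>j. \<Sum>m. t j m)"
    using has_sum_imp_sums sums_unique by blast
  define h where "h = (\<lambda>(n::nat, j::nat). (j, n - j))"
  have "bij_betw h (SIGMA n:UNIV. {..n}) (UNIV \<times> UNIV)"
    by (rule bij_betwI[where g = "\<lambda>(j, m). (j + m, j)"]) (auto simp: h_def)
  then have "((\<lambda>x. F (h x)) has_sum a) (SIGMA n:UNIV. {..n})"
    using a by (subst has_sum_reindex_bij_betw)
  then have "((\<lambda>n. \<Sum>j\<le>n. t j (n - j)) has_sum a) UNIV"
    by (rule has_sum_Sigma') (auto simp: F_def h_def)
  then show ?thesis
    unfolding rows by (rule has_sum_imp_sums)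
qed

definition tri :: "nat \<Rightarrow> nat" where
  "tri n = n * (n + 1) div 2"

text \<open>The generalised pentagonal numbers \<open>k (3 k - 1) / 2\<close> at \<open>k = -j\<close> and at \<open>k = j + 1\<close>.\<close>

definition pent_minus :: "nat \<Rightarrow> nat" where
  "pent_minus j = j * (3 * j + 1) div 2"

definition pent_plus :: "nat \<Rightarrow> nat" where
  "pent_plus j = (j + 1) * (3 * j + 2) div 2"

definition psi :: "'a::{real_normed_field,banach} \<Rightarrow> 'a" where
  "psi x = (\<Sum>n. x ^ tri n)"

definition f12 :: "'a::{real_normed_field,banach} \<Rightarrow> 'a" where
  "f12 x = (\<Sum>j. x ^ pent_minus j + x ^ pent_plus j)"

lemma tri_ge: "tri n \<ge> n"
  by (cases n) (auto simp: tri_def)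

lemma pent_minus_ge: "pent_minus n \<ge> n"
  by (cases n) (auto simp: pent_minus_def)

lemma pent_plus_ge: "pent_plus n \<ge> n"
  unfolding pent_plus_def by (induction n) auto

lemma summable_norm_power_ge:
  fixes x :: "'a::{real_normed_field,banach}"
  assumes x: "norm x < 1" and e: "\<And>n. e n \<ge> n"
  shows "summable (\<lambda>n. norm (x ^ e n))"
proof (rule summable_comparison_test'[OF summable_geometric[of "norm x"]])
  show "norm (norm x) < 1" using x by simp
  fix n
  have "norm x ^ e n \<le> norm x ^ n"
    using x e[of n] by (intro power_decreasing) auto
  then show "norm (norm (x ^ e n)) \<le> norm x ^ n"
    by (simp add: norm_power)
qed

lemma summable_psi:
  fixes x :: "'a::{real_normed_field,banach}"
  assumes "norm x < 1"
  shows "summable (\<lambda>n. x ^ tri n)"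
  by (rule summable_norm_cancel[OF summable_norm_power_ge[OF assms tri_ge]])

lemma summable_pent_minus:
  fixes x :: "'a::{real_normed_field,banach}"
  assumes "norm x < 1"
  shows "summable (\<lambda>n. x ^ pent_minus n)"
  by (rule summable_norm_cancel[OF summable_norm_power_ge[OF assms pent_minus_ge]])

lemma summable_pent_plus:
  fixes x :: "'a::{real_normed_field,banach}"
  assumes "norm x < 1"
  shows "summable (\<lambda>n. x ^ pent_plus n)"
  by (rule summable_norm_cancel[OF summable_norm_power_ge[OF assms pent_plus_ge]])

lemma f12_split:
  fixes x :: "'a::{real_normed_field,banach}"
  assumes "norm x < 1"
  shows "f12 x = (\<Sum>j. x ^ pent_minus j) + (\<Sum>j. x ^ pent_plus j)"
  unfolding f12_def using summable_pent_minus[OF assms] summable_pent_plus[OF assms]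
  by (rule suminf_add[symmetric])

lemma qpoch_qbinomial_diagonal:
  fixes y :: "'a::field"
  assumes nz: "\<And>m. qpoch y y m \<noteq> 0"
  shows "y ^ (n + \<beta>) * qpoch (-(y ^ (n + \<gamma>))) y n / qpoch y y n
       = (\<Sum>j\<le>n. y ^ (\<beta> + j * (j - 1) div 2 + j * j + (1 + \<gamma>) * j) / qpoch y y j
                   * ((y ^ (j + 1)) ^ (n - j) / qpoch y y (n - j)))"
proof -
  have "y ^ (n + \<beta>) * qpoch (-(y ^ (n + \<gamma>))) y n / qpoch y y n
      = y ^ (n + \<beta>) * (\<Sum>j\<le>n. y ^ (j * (j - 1) div 2) * (y ^ (n + \<gamma>)) ^ j
                  / (qpoch y y j * qpoch y y (n - j)))"
    by (subst qpoch_qbinomial[OF nz]) (use nz in simp)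
  also have "\<dots> = (\<Sum>j\<le>n. y ^ (\<beta> + j * (j - 1) div 2 + j * j + (1 + \<gamma>) * j) / qpoch y y j
                   * ((y ^ (j + 1)) ^ (n - j) / qpoch y y (n - j)))"
    unfolding sum_distrib_left
  proof (rule sum.cong[OF refl])
    fix j assume "j \<in> {..n}"
    then obtain m where n: "n = j + m" by (auto simp: le_iff_add)
    have exponent: "(n + \<beta>) + j * (j - 1) div 2 + (n + \<gamma>) * j
        = (\<beta> + j * (j - 1) div 2 + j * j + (1 + \<gamma>) * j) + (j + 1) * (n - j)"
      unfolding n by (simp add: algebra_simps)
    have "y ^ (n + \<beta>) * (y ^ (j * (j - 1) div 2) * (y ^ (n + \<gamma>)) ^ j)
        = y ^ ((n + \<beta>) + j * (j - 1) div 2 + (n + \<gamma>) * j)"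
      by (simp only: power_add power_mult mult.assoc)
    also have "\<dots> = y ^ (\<beta> + j * (j - 1) div 2 + j * j + (1 + \<gamma>) * j) * (y ^ (j + 1)) ^ (n - j)"
      by (simp only: exponent power_add power_mult)
    finally show "y ^ (n + \<beta>) * (y ^ (j * (j - 1) div 2) * (y ^ (n + \<gamma>)) ^ j / (qpoch y y j * qpoch y y (n - j)))
        = y ^ (\<beta> + j * (j - 1) div 2 + j * j + (1 + \<gamma>) * j) / qpoch y y j
          * ((y ^ (j + 1)) ^ (n - j) / qpoch y y (n - j))"
      using nz by (simp add: field_simps)
  qed
  finally show ?thesis .
qed

lemma suminf_abs_qbinomial_row_le:
  fixes q :: real
  assumes q: "\<bar>q\<bar> < 1" and e: "e \<ge> j"
  shows "(\<Sum>m. \<bar>q ^ e / qpoch q q j * ((q ^ (j + 1)) ^ m / qpoch q q m)\<bar>)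
       \<le> \<bar>q\<bar> ^ j * (exp (\<bar>q\<bar> / (1 - \<bar>q\<bar>)\<^sup>2) * (\<Sum>m. \<bar>q ^ m / qpoch q q m\<bar>))"
proof -
  define S where "S = (\<Sum>m. \<bar>(q ^ (j + 1)) ^ m / qpoch q q m\<bar>)"
  have qj: "\<bar>q ^ (j + 1)\<bar> < 1"
    using abs_mult_power_less_1[OF q q, of j] by (simp add: mult.commute)
  have "S \<le> (\<Sum>m. \<bar>q ^ m / qpoch q q m\<bar>)"
    unfolding S_def
  proof (rule suminf_le[OF _ summable_qexp_abs[OF q qj] summable_qexp_abs[OF q q]])
    fix m
    have "\<bar>q\<bar> ^ (j + 1) \<le> \<bar>q\<bar>"
      using q power_decreasing[of 1 "j + 1" "\<bar>q\<bar>"] by simp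
    then have "\<bar>q ^ (j + 1)\<bar> ^ m \<le> \<bar>q\<bar> ^ m"
      by (intro power_mono) (simp_all add: power_abs abs_mult)
    then show "\<bar>(q ^ (j + 1)) ^ m / qpoch q q m\<bar> \<le> \<bar>q ^ m / qpoch q q m\<bar>"
      by (simp add: power_abs divide_right_mono)
  qed
  moreover have "\<bar>q ^ e / qpoch q q j\<bar> \<le> \<bar>q\<bar> ^ j * exp (\<bar>q\<bar> / (1 - \<bar>q\<bar>)\<^sup>2)"
  proof -
    have "\<bar>q ^ e / qpoch q q j\<bar> = \<bar>q\<bar> ^ e * (1 / \<bar>qpoch q q j\<bar>)"
      by (simp add: power_abs)
    also have "\<dots> \<le> \<bar>q\<bar> ^ j * exp (\<bar>q\<bar> / (1 - \<bar>q\<bar>)\<^sup>2)"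
      using q e inverse_norm_qpoch_le_exp[of q j] by (intro mult_mono power_decreasing) auto
    finally show ?thesis .
  qed
  ultimately have "\<bar>q ^ e / qpoch q q j\<bar> * S
      \<le> (\<bar>q\<bar> ^ j * exp (\<bar>q\<bar> / (1 - \<bar>q\<bar>)\<^sup>2)) * (\<Sum>m. \<bar>q ^ m / qpoch q q m\<bar>)"
    using suminf_nonneg[OF summable_qexp_abs[OF q qj]] unfolding S_def by (intro mult_mono) auto
  moreover have "(\<Sum>m. \<bar>q ^ e / qpoch q q j * ((q ^ (j + 1)) ^ m / qpoch q q m)\<bar>)
      = \<bar>q ^ e / qpoch q q j\<bar> * S"
    unfolding abs_mult S_def by (rule suminf_mult[OF summable_qexp_abs[OF q qj]])
  ultimately show ?thesis
    by (simp add: mult.assoc)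
qed

text \<open>Expand \<open>(-q\<^bsup>n+\<gamma>\<^esup>; q)\<^sub>n\<close> by the \<open>q\<close>-binomial theorem and sum by rows: row \<open>j\<close> is
  an Euler series at \<open>q\<^bsup>j+1\<^esup>\<close>, equal to \<open>qexp q q * (q; q)\<^sub>j\<close>.\<close>

lemma qbinomial_diagonal_sums:
  fixes q :: real
  assumes q: "\<bar>q\<bar> < 1"
  shows "(\<lambda>n. q ^ (n + \<beta>) * qpoch (-(q ^ (n + \<gamma>))) q n / qpoch q q n) sums
           (qexp q q * (\<Sum>j. q ^ (\<beta> + j * (j - 1) div 2 + j * j + (1 + \<gamma>) * j)))"
proof -
  define E where "E j = \<beta> + j * (j - 1) div 2 + j * j + (1 + \<gamma>) * j" for j
  define t where "t j m = q ^ E j / qpoch q q j * ((q ^ (j + 1)) ^ m / qpoch q q m)" for j m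
  define B where "B = exp (\<bar>q\<bar> / (1 - \<bar>q\<bar>)\<^sup>2)"
  define C where "C = (\<Sum>m. \<bar>q ^ m / qpoch q q m\<bar>)"
  have nz: "qpoch q q m \<noteq> 0" for m
    using qpoch_pos[of q q m] q by simp
  have qj: "\<bar>q ^ (j + 1)\<bar> < 1" for j
    using abs_mult_power_less_1[OF q q, of j] by (simp add: mult.commute)
  have s1: "summable (\<lambda>m. \<bar>t j m\<bar>)" for j
    unfolding t_def abs_mult by (intro summable_mult summable_qexp_abs[OF q qj])
  have inner_abs: "(\<Sum>m. \<bar>t j m\<bar>) \<le> \<bar>q\<bar> ^ j * (B * C)" for j
    unfolding t_def B_def C_def by (rule suminf_abs_qbinomial_row_le[OF q]) (simp add: E_def)
  have s2: "summable (\<lambda>j. \<Sum>m. \<bar>t j m\<bar>)"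
  proof (rule summable_comparison_test'[OF summable_mult2[OF summable_geometric[of "\<bar>q\<bar>"]]])
    show "norm (\<Sum>m. \<bar>t j m\<bar>) \<le> \<bar>q\<bar> ^ j * (B * C)" for j
      using inner_abs[of j] suminf_nonneg[OF s1[of j]] by simp
  qed (use q in simp)
  have inner: "(\<Sum>m. t j m) = q ^ E j * qexp q q" for j
  proof -
    have "(\<Sum>m. t j m) = q ^ E j / qpoch q q j * qexp q (q ^ (j + 1))"
      unfolding t_def qexp_def by (rule suminf_mult[OF summable_qexp[OF q qj]])
    also have "qexp q (q ^ (j + 1)) = qexp q q * qpoch q q j"
      using qexp_mult_qpoch[OF q q, of j] by (simp add: mult.commute)
    finally show ?thesis using nz[of j] by simp
  qed
  have "summable (\<lambda>j. norm (q ^ E j))"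
    using q by (intro summable_norm_power_ge) (simp_all add: E_def)
  then have "summable (\<lambda>j. q ^ E j)"
    by (rule summable_norm_cancel)
  then have "(\<Sum>j. \<Sum>m. t j m) = qexp q q * (\<Sum>j. q ^ E j)"
    unfolding inner mult.commute[of _ "qexp q q"] by (rule suminf_mult)
  moreover have "(\<Sum>j\<le>n. t j (n - j)) = q ^ (n + \<beta>) * qpoch (-(q ^ (n + \<gamma>))) q n / qpoch q q n" for n
    unfolding t_def E_def by (rule qpoch_qbinomial_diagonal[OF nz, symmetric])
  ultimately show ?thesis
    using sums_antidiagonal[OF s1 s2] by (simp add: E_def)
qed

lemma exponent_eq_3_tri: "j * (j - 1) div 2 + j * j + 2 * j = 3 * tri j"
proof -
  have "j * (j + 1) = j * (j - 1) + 2 * j"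
    by (cases j) (simp_all add: algebra_simps)
  then have tri: "tri j = j * (j - 1) div 2 + j"
    unfolding tri_def by simp
  have "j * j = j * (j - 1) + j"
    by (cases j) (simp_all add: algebra_simps)
  moreover have "even (j * (j - 1))"
    by (cases j) auto
  ultimately have "j * j = 2 * (j * (j - 1) div 2) + j"
    by simp
  then show ?thesis
    unfolding tri by simp
qed

lemma exponent_eq_pent_minus: "j * (j - 1) div 2 + j * j + j = pent_minus j"
proof -
  have "j * (3 * j + 1) = j * (j - 1) + 2 * (j * j + j)"
    by (cases j) (simp_all add: algebra_simps)
  then show ?thesis unfolding pent_minus_def by simp
qed

lemma exponent_eq_pent_plus: "1 + j * (j - 1) div 2 + j * j + 3 * j = pent_plus j"
proof -
  have "(j + 1) * (3 * j + 2) = j * (j - 1) + 2 * (j * j + 3 * j + 1)"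
    by (cases j) (simp_all add: algebra_simps)
  then show ?thesis unfolding pent_plus_def by simp
qed

lemma qpoch_minus_pos:
  fixes q :: real
  assumes "\<bar>q\<bar> < 1"
  shows "qpoch (-q) q n > 0"
  using assms by (intro qpoch_pos) auto

lemma cubic_F_q:
  fixes q :: real
  assumes q: "\<bar>q\<bar> < 1"
  shows "cubic_F q q = qexp q q * psi (q ^ 3)"
proof -
  have "qpoch (-q) q (2 * n) * q ^ n / qpoch (q\<^sup>2) (q\<^sup>2) n
      = q ^ (n + 0) * qpoch (-(q ^ (n + 1))) q n / qpoch q q n" for n
  proof -
    have "qpoch (-q) q (2 * n) = qpoch (-q) q n * qpoch (-(q ^ (n + 1))) q n"
      using qpoch_add[of "-q" q n n] by (simp add: mult_2)
    then show ?thesis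
      unfolding qpoch_square using qpoch_minus_pos[OF q, of n] by simp
  qed
  moreover have "(\<Sum>j. q ^ (0 + j * (j - 1) div 2 + j * j + (1 + 1) * j)) = psi (q ^ 3)"
  proof -
    have "(0::nat) + j * (j - 1) div 2 + j * j + (1 + 1) * j = 3 * tri j" for j
      using exponent_eq_3_tri[of j] by simp
    then show ?thesis
      unfolding psi_def by (simp only: power_mult)
  qed
  ultimately have "(\<lambda>n. qpoch (-q) q (2 * n) * q ^ n / qpoch (q\<^sup>2) (q\<^sup>2) n) sums (qexp q q * psi (q ^ 3))"
    using qbinomial_diagonal_sums[OF q, of 0 1] by simp
  then show ?thesis
    using cubic_F_sums[OF q, of q] sums_unique2 by blast
qed

lemma cubic_F_one_term:
  fixes q :: real
  assumes q: "\<bar>q\<bar> < 1"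
  shows "qpoch (-1) q (2 * Suc k) * q ^ Suc k / qpoch (q\<^sup>2) (q\<^sup>2) (Suc k)
       = q ^ Suc k * qpoch (-(q ^ Suc k)) q (Suc k) / qpoch q q (Suc k)
       + q ^ (k + 1) * qpoch (-(q ^ (k + 2))) q k / qpoch q q k"
proof -
  define P where "P = qpoch (-(q ^ (k + 2))) q k"
  define Q where "Q = qpoch q q k"
  define R where "R = qpoch (-q) q k"
  define u where "u = q ^ Suc k"
  have "Q > 0" "R > 0"
    unfolding Q_def R_def using q by (simp_all add: qpoch_pos qpoch_minus_pos)
  moreover have "1 - u > 0" "1 + u > 0"
    using abs_mult_power_less_1[OF q q, of k] unfolding u_def by (simp_all add: abs_less_iff)
  ultimately have nz: "Q \<noteq> 0" "R \<noteq> 0" "1 - u \<noteq> 0" "1 + u \<noteq> 0"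
    by auto
  have A: "qpoch (-1) q (2 * Suc k) = 2 * R * (1 + u) * P"
  proof -
    have "qpoch (-1) q (2 * Suc k) = qpoch (-1) q (Suc (Suc k)) * qpoch (- (q ^ Suc (Suc k))) q k"
      using qpoch_add[of "-1" q "Suc (Suc k)" k] by (simp add: mult_2)
    moreover have "qpoch (-1) q (Suc k) = 2 * R"
      unfolding R_def using qpoch_Suc_shift[of "-1" q k] by simp
    then have "qpoch (-1) q (Suc (Suc k)) = 2 * R * (1 + u)"
      unfolding u_def using qpoch_Suc[of "-1" q "Suc k"] by simp
    ultimately show ?thesis
      unfolding P_def by (simp add: numeral_2_eq_2)
  qed
  have B: "qpoch (q\<^sup>2) (q\<^sup>2) (Suc k) = Q * (1 - u) * (R * (1 + u))"
    unfolding qpoch_square Q_def R_def u_def by (simp add: qpoch_Suc)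
  have C: "qpoch (-u) q (Suc k) = (1 + u) * P"
    unfolding P_def u_def by (simp add: qpoch_Suc_shift numeral_2_eq_2 mult.commute)
  have D: "qpoch q q (Suc k) = Q * (1 - u)"
    unfolding Q_def u_def by (simp add: qpoch_Suc)
  have "2 * R * (1 + u) * P * u / (Q * (1 - u) * (R * (1 + u)))
      = (2 * u * P) * (R * (1 + u)) / ((Q * (1 - u)) * (R * (1 + u)))"
    by (simp add: mult_ac)
  also have "\<dots> = 2 * u * P / (Q * (1 - u))"
    using nz by (intro nonzero_mult_divide_mult_cancel_right) auto
  also have "\<dots> = u * ((1 + u) * P) / (Q * (1 - u)) + u * P / Q"
    using nz by (simp add: field_simps)
  finally show ?thesis
    unfolding A B C D Suc_eq_plus1[symmetric] u_def[symmetric] P_def[symmetric] Q_def[symmetric] .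
qed

lemma cubic_F_one:
  fixes q :: real
  assumes q: "\<bar>q\<bar> < 1"
  shows "cubic_F q 1 = qexp q q * f12 q"
proof -
  define X where "X n = q ^ (n + 0) * qpoch (-(q ^ (n + 0))) q n / qpoch q q n" for n
  define Y where "Y n = q ^ (n + 1) * qpoch (-(q ^ (n + 2))) q n / qpoch q q n" for n
  have "X sums (qexp q q * (\<Sum>j. q ^ (0 + j * (j - 1) div 2 + j * j + (1 + 0) * j)))"
    unfolding X_def by (rule qbinomial_diagonal_sums[OF q])
  moreover have "(0::nat) + j * (j - 1) div 2 + j * j + (1 + 0) * j = pent_minus j" for j
    using exponent_eq_pent_minus[of j] by simp
  ultimately have X: "X sums (qexp q q * (\<Sum>j. q ^ pent_minus j))"
    by (simp only:)
  have "Y sums (qexp q q * (\<Sum>j. q ^ (1 + j * (j - 1) div 2 + j * j + (1 + 2) * j)))"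
    unfolding Y_def by (rule qbinomial_diagonal_sums[OF q])
  moreover have "(1::nat) + j * (j - 1) div 2 + j * j + (1 + 2) * j = pent_plus j" for j
    using exponent_eq_pent_plus[of j] by simp
  ultimately have "Y sums (qexp q q * (\<Sum>j. q ^ pent_plus j))"
    by (simp only:)
  then have Y: "(\<lambda>n. if n = 0 then 0 else Y (n - 1)) sums (qexp q q * (\<Sum>j. q ^ pent_plus j))"
    using sums_Suc_iff[of "\<lambda>n. if n = 0 then 0 else Y (n - 1)"] by simp
  have "qpoch (-1) q (2 * n) * q ^ n / qpoch (q\<^sup>2) (q\<^sup>2) n = X n + (if n = 0 then 0 else Y (n - 1))" for n
    using cubic_F_one_term[OF q, of "n - 1"] by (cases n) (simp_all add: X_def Y_def)
  then have "(\<lambda>n. qpoch (-1) q (2 * n) * q ^ n / qpoch (q\<^sup>2) (q\<^sup>2) n) sums (qexp q q * f12 q)"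
    using sums_add[OF X Y] f12_split[of q] q by (simp add: distrib_left)
  then show ?thesis
    using cubic_F_sums[OF q, of 1] sums_unique2 by fastforce
qed

lemma prod_lessThan_add: "(\<Prod>i<a + b. f i) = (\<Prod>i<a. f i) * (\<Prod>i<b. f (a + i))"
  for f :: "nat \<Rightarrow> 'a::comm_monoid_mult"
  by (induction b) (simp_all add: mult_ac)

lemma sum_lessThan_add: "(\<Sum>i<a + b. f i) = (\<Sum>i<a. f i) + (\<Sum>i<b. f (a + i))"
  for f :: "nat \<Rightarrow> 'a::comm_monoid_add"
  by (induction b) (simp_all add: add_ac)

lemma of_nat_mult_pred_div_2: "real (x * (x - 1) div 2) = real x * (real x - 1) / 2"
proof (cases x)
  case (Suc k)
  then have "even (x * (x - 1))" by auto
  then have "real (x * (x - 1) div 2) = real (x * (x - 1)) / 2"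
    by (simp add: real_of_nat_div)
  also have "real (x * (x - 1)) = real x * (real x - 1)"
    using Suc by (simp add: of_nat_diff algebra_simps)
  finally show ?thesis .
qed simp

lemma of_nat_tri: "real (tri k) = real k * (real k + 1) / 2"
proof -
  have "even (k * (k + 1))" by auto
  then show ?thesis unfolding tri_def by (simp add: real_of_nat_div algebra_simps)
qed

lemma prod_power_add_power:
  fixes y :: "'a::field"
  shows "(\<Prod>i<m + (m + 2). y ^ m + y ^ i)
       = y ^ (m * (m - 1) div 2 + m * (m + 2)) * (2 * qpoch (-y) y m * qpoch (-y) y (Suc m))"
proof -
  have low: "(\<Prod>i<m. y ^ m + y ^ i) = y ^ (m * (m - 1) div 2) * qpoch (-y) y m"
  proof -
    have "(\<Prod>i<m. y ^ m + y ^ i) = (\<Prod>l<m. y ^ m + y ^ (m - Suc l))"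
      by (rule prod.nat_diff_reindex[symmetric])
    also have "\<dots> = (\<Prod>l<m. y ^ (m - Suc l) * (1 + y ^ Suc l))"
    proof (rule prod.cong[OF refl])
      fix l assume "l \<in> {..<m}"
      then have "m = (m - Suc l) + Suc l"
        by simp
      then have "y ^ m = y ^ (m - Suc l) * y ^ Suc l"
        by (metis power_add)
      then show "y ^ m + y ^ (m - Suc l) = y ^ (m - Suc l) * (1 + y ^ Suc l)"
        by (simp add: algebra_simps)
    qed
    also have "\<dots> = y ^ (\<Sum>l<m. m - Suc l) * qpoch (-y) y m"
      unfolding qpoch_def by (simp add: prod.distrib power_sum)
    also have "(\<Sum>l<m. m - Suc l) = m * (m - 1) div 2"
      using sum.nat_diff_reindex[of id m] Sum_Ico_nat[of 0 m] by (simp add: atLeast0LessThan)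
    finally show ?thesis .
  qed
  have high: "(\<Prod>i<m + 2. y ^ m + y ^ (m + i)) = y ^ (m * (m + 2)) * (2 * qpoch (-y) y (Suc m))"
  proof -
    have "(\<Prod>i<m + 2. y ^ m + y ^ (m + i)) = (\<Prod>i<m + 2. y ^ m * (1 + y ^ i))"
      by (intro prod.cong) (simp_all add: power_add algebra_simps)
    also have "\<dots> = (y ^ m) ^ (m + 2) * (\<Prod>i<m + 2. 1 + y ^ i)"
      by (simp add: prod.distrib)
    also have "(\<Prod>i<m + 2. 1 + y ^ i) = 2 * qpoch (-y) y (Suc m)"
      using prod.lessThan_Suc_shift[of "\<lambda>i. 1 + y ^ i" "Suc m"]
      unfolding qpoch_def by (simp add: one_add_one)
    finally show ?thesis
      by (simp only: power_mult)
  qed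
  have "(\<Prod>i<m + (m + 2). y ^ m + y ^ i) = (\<Prod>i<m. y ^ m + y ^ i) * (\<Prod>i<m + 2. y ^ m + y ^ (m + i))"
    by (rule prod_lessThan_add)
  then show ?thesis
    unfolding low high by (simp add: power_add mult_ac)
qed

lemma gauss_exponent_low:
  assumes "k \<le> m"
  shows "(m - k) * (m - k - 1) div 2 + m * (Suc m + Suc k) = m * (m - 1) div 2 + m * (m + 2) + tri k"
proof -
  have "real ((m - k) * (m - k - 1) div 2) = (real m - real k) * (real m - real k - 1) / 2"
    using of_nat_mult_pred_div_2[of "m - k"] assms by (simp add: of_nat_diff)
  then have "real ((m - k) * (m - k - 1) div 2 + m * (Suc m + Suc k))
      = real (m * (m - 1) div 2 + m * (m + 2) + tri k)"
    unfolding of_nat_add of_nat_mult of_nat_mult_pred_div_2[of m] of_nat_tri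
    by (simp add: field_simps)
  then show ?thesis
    by (simp only: of_nat_eq_iff)
qed

lemma gauss_exponent_high:
  assumes "k \<le> Suc m"
  shows "(Suc m + k) * (Suc m + k - 1) div 2 + m * (Suc m - k)
       = m * (m - 1) div 2 + m * (m + 2) + tri k"
proof -
  have "real ((Suc m + k) * (Suc m + k - 1) div 2) = (real m + 1 + real k) * (real m + real k) / 2"
    using of_nat_mult_pred_div_2[of "Suc m + k"] by simp
  moreover have "real (Suc m - k) = real m + 1 - real k"
    using assms by (simp add: of_nat_diff)
  ultimately have "real ((Suc m + k) * (Suc m + k - 1) div 2 + m * (Suc m - k))
      = real (m * (m - 1) div 2 + m * (m + 2) + tri k)"
    unfolding of_nat_add of_nat_mult of_nat_mult_pred_div_2[of m] of_nat_tri
    by (simp add: field_simps)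
  then show ?thesis
    by (simp only: of_nat_eq_iff)
qed

lemma gauss_term_low:
  fixes y :: "'a::field"
  assumes k: "k \<le> m"
  shows "y ^ ((m - k) * (m - k - 1) div 2) * (y ^ m) ^ (m + (m + 2) - (m - k))
           / (qpoch y y (m - k) * qpoch y y (m + (m + 2) - (m - k)))
       = y ^ (m * (m - 1) div 2 + m * (m + 2)) * (y ^ tri k / (qpoch y y (m - k) * qpoch y y (Suc m + Suc k)))"
proof -
  have N: "m + (m + 2) - (m - k) = Suc m + Suc k"
    using k by simp
  have "y ^ ((m - k) * (m - k - 1) div 2) * (y ^ m) ^ (Suc m + Suc k)
      = y ^ ((m - k) * (m - k - 1) div 2 + m * (Suc m + Suc k))"
    by (simp only: power_add power_mult)
  also have "\<dots> = y ^ (m * (m - 1) div 2 + m * (m + 2)) * y ^ tri k"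
    by (simp only: gauss_exponent_low[OF k] power_add)
  finally have "y ^ ((m - k) * (m - k - 1) div 2) * (y ^ m) ^ (Suc m + Suc k)
      = y ^ (m * (m - 1) div 2 + m * (m + 2)) * y ^ tri k" .
  then show ?thesis
    unfolding N by simp
qed

lemma gauss_term_high:
  fixes y :: "'a::field"
  assumes k: "k \<le> Suc m"
  shows "y ^ ((Suc m + k) * (Suc m + k - 1) div 2) * (y ^ m) ^ (m + (m + 2) - (Suc m + k))
           / (qpoch y y (Suc m + k) * qpoch y y (m + (m + 2) - (Suc m + k)))
       = y ^ (m * (m - 1) div 2 + m * (m + 2)) * (y ^ tri k / (qpoch y y (Suc m + k) * qpoch y y (Suc m - k)))"
proof -
  have N: "m + (m + 2) - (Suc m + k) = Suc m - k"
    using k by simp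
  have "y ^ ((Suc m + k) * (Suc m + k - 1) div 2) * (y ^ m) ^ (Suc m - k)
      = y ^ ((Suc m + k) * (Suc m + k - 1) div 2 + m * (Suc m - k))"
    by (simp only: power_add power_mult)
  also have "\<dots> = y ^ (m * (m - 1) div 2 + m * (m + 2)) * y ^ tri k"
    by (simp only: gauss_exponent_high[OF k] power_add)
  finally have "y ^ ((Suc m + k) * (Suc m + k - 1) div 2) * (y ^ m) ^ (Suc m - k)
      = y ^ (m * (m - 1) div 2 + m * (m + 2)) * y ^ tri k" .
  then show ?thesis
    unfolding N by simp
qed

text \<open>A finite form of Gauss's product for \<open>\<psi>\<close>: the \<open>q\<close>-binomial expansion of
  \<open>\<Prod>i<2m+2. y\<^sup>m + y\<^sup>i\<close>, split at its central term.\<close>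

lemma gauss_finite_identity:
  fixes y :: "'a::field"
  assumes nz: "\<And>m. qpoch y y m \<noteq> 0" and y0: "y \<noteq> 0"
  shows "(\<Sum>k\<le>Suc m. y ^ tri k / (qpoch y y (Suc m + k) * qpoch y y (Suc m - k)))
       + (\<Sum>k<Suc m. y ^ tri k / (qpoch y y (m - k) * qpoch y y (Suc m + Suc k)))
       = 2 * qpoch (-y) y m * qpoch (-y) y (Suc m) / qpoch y y (2 * Suc m)"
proof -
  define N where "N = m + (m + 2)"
  define C where "C = m * (m - 1) div 2 + m * (m + 2)"
  define f where "f j = y ^ (j * (j - 1) div 2) * (y ^ m) ^ (N - j) / (qpoch y y j * qpoch y y (N - j))" for j
  have "y ^ C * (2 * qpoch (-y) y m * qpoch (-y) y (Suc m)) = qpoch y y N * (\<Sum>j\<le>N. f j)"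
    using prod_power_add_power[of y m] prod_qbinomial_homogeneous[OF nz, where u = "y ^ m" and v = 1 and N = N] y0
    by (simp add: N_def C_def f_def)
  also have "(\<Sum>j\<le>N. f j) = (\<Sum>j<Suc m + (m + 2). f j)"
    by (simp add: N_def lessThan_Suc_atMost[symmetric])
  also have "\<dots> = (\<Sum>j<Suc m. f j) + (\<Sum>k<m + 2. f (Suc m + k))"
    by (rule sum_lessThan_add)
  also have "(\<Sum>j<Suc m. f j) = (\<Sum>k<Suc m. f (m - k))"
    using sum.nat_diff_reindex[of f "Suc m"] by simp
  also have "\<dots> = y ^ C * (\<Sum>k<Suc m. y ^ tri k / (qpoch y y (m - k) * qpoch y y (Suc m + Suc k)))"
    unfolding sum_distrib_left f_def N_def C_def by (intro sum.cong refl gauss_term_low) simp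
  also have "(\<Sum>k<m + 2. f (Suc m + k)) = (\<Sum>k\<le>Suc m. f (Suc m + k))"
    by (simp add: lessThan_Suc_atMost[symmetric])
  also have "\<dots> = y ^ C * (\<Sum>k\<le>Suc m. y ^ tri k / (qpoch y y (Suc m + k) * qpoch y y (Suc m - k)))"
    unfolding sum_distrib_left f_def N_def C_def by (intro sum.cong refl gauss_term_high) simp
  finally have "y ^ C * (2 * qpoch (-y) y m * qpoch (-y) y (Suc m)) = y ^ C * (qpoch y y N *
      ((\<Sum>k\<le>Suc m. y ^ tri k / (qpoch y y (Suc m + k) * qpoch y y (Suc m - k)))
       + (\<Sum>k<Suc m. y ^ tri k / (qpoch y y (m - k) * qpoch y y (Suc m + Suc k)))))"
    by (simp only: distrib_left mult_ac add.commute)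
  then have "2 * qpoch (-y) y m * qpoch (-y) y (Suc m) = qpoch y y N *
      ((\<Sum>k\<le>Suc m. y ^ tri k / (qpoch y y (Suc m + k) * qpoch y y (Suc m - k)))
       + (\<Sum>k<Suc m. y ^ tri k / (qpoch y y (m - k) * qpoch y y (Suc m + Suc k))))"
    using y0 by simp
  moreover have "N = 2 * Suc m"
    by (simp add: N_def)
  ultimately show ?thesis
    using nz[of N] by (simp add: field_simps)
qed

definition gauss_prod :: "nat \<Rightarrow> 'a::comm_ring_1 \<Rightarrow> 'a" where
  "gauss_prod n y = qpoch (y\<^sup>2) (y\<^sup>2) n * qpoch (-y) y n"

lemma gauss_prod_zero: "gauss_prod n (0::'a::comm_ring_1) = 1"
  unfolding gauss_prod_def qpoch_def by (simp add: power2_eq_square)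

lemma psi_zero: "psi (0::'a::{real_normed_field,banach}) = 1"
proof -
  have "psi (0::'a) = (\<Sum>n\<in>{0}. (0::'a) ^ tri n)"
    unfolding psi_def
  proof (rule suminf_finite)
    fix n :: nat
    assume "n \<notin> {0}"
    then have "tri n \<ge> 1" using tri_ge[of n] by simp
    then show "(0::'a) ^ tri n = 0" by simp
  qed simp
  then show ?thesis by (simp add: tri_def)
qed

lemma gauss_finite_identity_scaled:
  fixes y :: "'a::field"
  assumes nz: "\<And>m. qpoch y y m \<noteq> 0" and y0: "y \<noteq> 0"
  shows "(\<Sum>k\<le>Suc m. y ^ tri k * (qpoch y y (Suc m) * qpoch y y (2 * Suc m)
                                   / (qpoch y y (Suc m + k) * qpoch y y (Suc m - k))))
       + (\<Sum>k<Suc m. y ^ tri k * (qpoch y y (Suc m) * qpoch y y (2 * Suc m)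
                                   / (qpoch y y (Suc m - Suc k) * qpoch y y (Suc m + Suc k))))
       = 2 * (qpoch (y\<^sup>2) (y\<^sup>2) (Suc m) * qpoch (-y) y m)"
proof -
  define P where "P = qpoch y y (Suc m) * qpoch y y (2 * Suc m)"
  have "(\<Sum>k\<le>Suc m. y ^ tri k * (P / (qpoch y y (Suc m + k) * qpoch y y (Suc m - k))))
      + (\<Sum>k<Suc m. y ^ tri k * (P / (qpoch y y (Suc m - Suc k) * qpoch y y (Suc m + Suc k))))
      = P * (2 * qpoch (-y) y m * qpoch (-y) y (Suc m) / qpoch y y (2 * Suc m))"
    unfolding gauss_finite_identity[OF nz y0, symmetric] distrib_left sum_distrib_left
    by (simp add: mult_ac)
  also have "\<dots> = 2 * ((qpoch y y (Suc m) * qpoch (-y) y (Suc m)) * qpoch (-y) y m)"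
    using nz[of "2 * Suc m"] unfolding P_def by (simp add: field_simps)
  finally show ?thesis
    unfolding P_def qpoch_square .
qed

lemma norm_qpoch_ratio_le:
  fixes y :: "'a::real_normed_field"
  assumes y: "norm y < 1"
  shows "norm (qpoch y y a * qpoch y y b / (qpoch y y c * qpoch y y d))
       \<le> exp (norm y / (1 - norm y)) ^ 2 * exp (norm y / (1 - norm y)\<^sup>2) ^ 2"
proof -
  define B where "B = exp (norm y / (1 - norm y))"
  define E where "E = exp (norm y / (1 - norm y)\<^sup>2)"
  have nB: "norm (qpoch y y m) \<le> B" for m
    unfolding B_def using y by (intro norm_qpoch_le) auto
  have nE: "1 / norm (qpoch y y m) \<le> E" for m
    unfolding E_def by (rule inverse_norm_qpoch_le_exp[OF y])
  have "norm (qpoch y y a * qpoch y y b / (qpoch y y c * qpoch y y d))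
      = (norm (qpoch y y a) * norm (qpoch y y b)) * ((1 / norm (qpoch y y c)) * (1 / norm (qpoch y y d)))"
    by (simp add: norm_mult norm_divide)
  also have "\<dots> \<le> (B * B) * (E * E)"
    by (intro mult_mono nB nE) (auto simp: B_def E_def)
  finally show ?thesis
    by (simp add: B_def E_def power2_eq_square)
qed

lemma tendsto_psi_tannery:
  fixes y :: "'a::{real_normed_field,banach}" and r s :: "nat \<Rightarrow> nat \<Rightarrow> nat"
  assumes y: "norm y < 1"
    and r: "\<And>k. filterlim (r k) sequentially sequentially"
    and s: "\<And>k. filterlim (s k) sequentially sequentially"
    and c: "filterlim c sequentially sequentially"
  shows "(\<lambda>n. \<Sum>k. if k \<le> c n then y ^ tri k * (qpoch y y n * qpoch y y (2 * n)
                                      / (qpoch y y (r k n) * qpoch y y (s k n))) else 0)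
         \<longlonglongrightarrow> psi y"
proof -
  define a where "a k n = (if k \<le> c n then y ^ tri k * (qpoch y y n * qpoch y y (2 * n)
                                      / (qpoch y y (r k n) * qpoch y y (s k n))) else 0)" for k n
  define M where "M = exp (norm y / (1 - norm y)) ^ 2 * exp (norm y / (1 - norm y)\<^sup>2) ^ 2"
  obtain P where P: "(\<lambda>n. qpoch y y n) \<longlonglongrightarrow> P" "P \<noteq> 0"
    using qpoch_tendsto_nonzero[OF y] by blast
  have "(\<lambda>n. a k n) \<longlonglongrightarrow> y ^ tri k" for k
  proof -
    have "(\<lambda>n. qpoch y y (2 * n)) \<longlonglongrightarrow> P"
      by (rule filterlim_compose[OF P(1) filterlim_subseq]) (auto simp: strict_mono_def)
    moreover have "(\<lambda>n. qpoch y y (r k n)) \<longlonglongrightarrow> P" "(\<lambda>n. qpoch y y (s k n)) \<longlonglongrightarrow> P"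
      by (rule filterlim_compose[OF P(1) r], rule filterlim_compose[OF P(1) s])
    ultimately have "(\<lambda>n. y ^ tri k * (qpoch y y n * qpoch y y (2 * n) / (qpoch y y (r k n) * qpoch y y (s k n))))
        \<longlonglongrightarrow> y ^ tri k * (P * P / (P * P))"
      using P by (intro tendsto_intros) auto
    moreover have "\<forall>\<^sub>F n in sequentially. k \<le> c n"
      using c by (simp add: filterlim_at_top)
    then have "\<forall>\<^sub>F n in sequentially.
        y ^ tri k * (qpoch y y n * qpoch y y (2 * n) / (qpoch y y (r k n) * qpoch y y (s k n))) = a k n"
      by eventually_elim (simp add: a_def)
    ultimately show ?thesis
      using P(2) by (simp add: Lim_transform_eventually)
  qed
  moreover have "norm (a k n) \<le> norm (y ^ tri k) * M" for k n
  proof -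
    have "norm (y ^ tri k) * norm (qpoch y y n * qpoch y y (2 * n) / (qpoch y y (r k n) * qpoch y y (s k n)))
        \<le> norm (y ^ tri k) * M"
      unfolding M_def using norm_qpoch_ratio_le[OF y] by (rule mult_left_mono) simp
    then show ?thesis
      by (cases "k \<le> c n") (simp_all only: a_def if_True if_False norm_mult norm_zero, simp add: M_def)
  qed
  moreover have "summable (\<lambda>k. norm (y ^ tri k) * M)"
    by (intro summable_mult2 summable_norm_power_ge[OF y tri_ge])
  ultimately have "(\<lambda>n. \<Sum>k. a k n) \<longlonglongrightarrow> (\<Sum>k. y ^ tri k)"
    using tannerys_theorem[of a "\<lambda>k. y ^ tri k" sequentially "\<lambda>k. norm (y ^ tri k) * M"]
    by (auto intro: always_eventually)
  then show ?thesis
    unfolding psi_def a_def .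
qed

text \<open>Both halves of the scaled finite identity tend to
  \<open>\<psi>(y)\<close> by Tannery's theorem.\<close>

lemma gauss_prod_tendsto_psi:
  fixes y :: "'a::{real_normed_field,banach}"
  assumes y: "norm y < 1"
  shows "(\<lambda>n. gauss_prod n y) \<longlonglongrightarrow> psi y"
proof (cases "y = 0")
  case True
  then show ?thesis by (simp add: gauss_prod_zero psi_zero)
next
  case y0: False
  have nz: "qpoch y y m \<noteq> 0" for m
    using y by (intro qpoch_nonzero) auto
  define a1 where "a1 k n = (if k \<le> n then y ^ tri k * (qpoch y y n * qpoch y y (2 * n)
                                      / (qpoch y y (n + k) * qpoch y y (n - k))) else 0)" for k n
  define a2 where "a2 k n = (if k \<le> n - 1 then y ^ tri k * (qpoch y y n * qpoch y y (2 * n)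
                                      / (qpoch y y (n - Suc k) * qpoch y y (n + Suc k))) else 0)" for k n
  have "(\<lambda>n. \<Sum>k. a1 k n) \<longlonglongrightarrow> psi y"
    unfolding a1_def using y
    by (intro tendsto_psi_tannery[where c = "\<lambda>n. n"] filterlim_ident filterlim_minus_const_nat_at_top
        filterlim_subseq) (auto simp: strict_mono_def)
  moreover have "(\<lambda>n. \<Sum>k. a2 k n) \<longlonglongrightarrow> psi y"
    unfolding a2_def using y
    by (intro tendsto_psi_tannery filterlim_minus_const_nat_at_top filterlim_subseq)
       (auto simp: strict_mono_def)
  ultimately have "(\<lambda>m. ((\<Sum>k. a1 k (Suc m)) + (\<Sum>k. a2 k (Suc m))) / 2) \<longlonglongrightarrow> (psi y + psi y) / 2"
    by (intro tendsto_intros LIMSEQ_Suc) auto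
  moreover have "((\<Sum>k. a1 k (Suc m)) + (\<Sum>k. a2 k (Suc m))) / 2 = qpoch (y\<^sup>2) (y\<^sup>2) (Suc m) * qpoch (-y) y m" for m
  proof -
    have "(\<Sum>k. a1 k (Suc m)) = (\<Sum>k\<le>Suc m. a1 k (Suc m))"
      by (rule suminf_finite) (auto simp: a1_def)
    moreover have "(\<Sum>k. a2 k (Suc m)) = (\<Sum>k<Suc m. a2 k (Suc m))"
      by (rule suminf_finite) (auto simp: a2_def)
    ultimately show ?thesis
      using gauss_finite_identity_scaled[OF nz y0, of m] by (simp add: a1_def a2_def)
  qed
  ultimately have "(\<lambda>m. qpoch (y\<^sup>2) (y\<^sup>2) (Suc m) * qpoch (-y) y m) \<longlonglongrightarrow> psi y"
    by (simp add: field_simps)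
  then have "(\<lambda>m. qpoch (y\<^sup>2) (y\<^sup>2) (Suc m) * qpoch (-y) y m * (1 + y * y ^ m)) \<longlonglongrightarrow> psi y * (1 + y * 0)"
    using y by (intro tendsto_intros LIMSEQ_power_zero) auto
  then have "(\<lambda>m. gauss_prod (Suc m) y) \<longlonglongrightarrow> psi y"
    by (simp add: gauss_prod_def qpoch_Suc mult_ac)
  then show ?thesis
    by (rule LIMSEQ_imp_Suc)
qed

lemma of_nat_pent_minus: "real (pent_minus m) = real m * (3 * real m + 1) / 2"
proof -
  have "even (m * (3 * m + 1))" by auto
  then show ?thesis unfolding pent_minus_def by (simp add: real_of_nat_div algebra_simps)
qed

lemma of_nat_pent_plus: "real (pent_plus m) = (real m + 1) * (3 * real m + 2) / 2"
proof -
  have "even ((m + 1) * (3 * m + 2))" by auto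
  then show ?thesis unfolding pent_plus_def by (simp add: real_of_nat_div field_simps)
qed

lemma tri_3_mult: "tri (3 * m) = 3 * pent_minus m"
proof -
  have "real (tri (3 * m)) = real (3 * pent_minus m)"
    unfolding of_nat_mult of_nat_tri of_nat_pent_minus by (simp add: field_simps)
  then show ?thesis by (simp only: of_nat_eq_iff)
qed

lemma tri_3_mult_1: "tri (3 * m + 1) = 1 + 9 * tri m"
proof -
  have "real (tri (3 * m + 1)) = real (1 + 9 * tri m)"
    unfolding of_nat_mult of_nat_add of_nat_tri by (simp add: field_simps)
  then show ?thesis by (simp only: of_nat_eq_iff)
qed

lemma tri_3_mult_2: "tri (3 * m + 2) = 3 * pent_plus m"
proof -
  have "real (tri (3 * m + 2)) = real (3 * pent_plus m)"
    unfolding of_nat_mult of_nat_tri of_nat_pent_plus by (simp add: field_simps)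
  then show ?thesis by (simp only: of_nat_eq_iff)
qed

lemma norm_power_less_one:
  fixes x :: "'a::real_normed_field"
  assumes "norm x < 1" "k > 0"
  shows "norm (x ^ k) < 1"
  using assms by (simp add: norm_power power_less_one_iff)

lemma psi_3_dissection:
  fixes x :: "'a::{real_normed_field,banach}"
  assumes x: "norm x < 1"
  shows "psi x = x * psi (x ^ 9) + f12 (x ^ 3)"
proof -
  have x9: "norm (x ^ 9) < 1" and x3: "norm (x ^ 3) < 1"
    using norm_power_less_one[OF x] by auto
  have "(\<lambda>n. x ^ tri n) sums psi x"
    unfolding psi_def by (rule summable_sums[OF summable_psi[OF x]])
  then have "(\<lambda>m. \<Sum>n\<in>{m * 3..<m * 3 + 3}. x ^ tri n) sums psi x"
    using sums_group[of _ _ 3] by simp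
  moreover have "(\<Sum>n\<in>{m * 3..<m * 3 + 3}. x ^ tri n)
      = x * (x ^ 9) ^ tri m + ((x ^ 3) ^ pent_minus m + (x ^ 3) ^ pent_plus m)" for m
  proof -
    have "{m * 3..<m * 3 + 3} = {3 * m, 3 * m + 1, 3 * m + 2}"
      by auto
    then have "(\<Sum>n\<in>{m * 3..<m * 3 + 3}. x ^ tri n) = x ^ tri (3 * m) + x ^ tri (3 * m + 1) + x ^ tri (3 * m + 2)"
      by (simp add: add_ac)
    also have "\<dots> = (x ^ 3) ^ pent_minus m + x * (x ^ 9) ^ tri m + (x ^ 3) ^ pent_plus m"
      unfolding tri_3_mult tri_3_mult_1 tri_3_mult_2 by (simp add: power_mult power_add)
    finally show ?thesis
      by (simp add: add_ac)
  qed
  moreover have "(\<lambda>m. x * (x ^ 9) ^ tri m + ((x ^ 3) ^ pent_minus m + (x ^ 3) ^ pent_plus m))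
      sums (x * psi (x ^ 9) + f12 (x ^ 3))"
    unfolding psi_def f12_def
    by (intro sums_add sums_mult summable_sums summable_psi[OF x9] summable_add
        summable_pent_minus[OF x3] summable_pent_plus[OF x3])
  ultimately show ?thesis
    using sums_unique2 by force
qed

lemma cube_root_unity_cube:
  fixes w :: "'a::comm_ring_1"
  assumes "w\<^sup>2 + w + 1 = 0"
  shows "w ^ 3 = 1"
proof -
  have "w ^ 3 - 1 = (w - 1) * (w\<^sup>2 + w + 1)"
    by (simp add: algebra_simps power2_eq_square power3_eq_cube)
  then show ?thesis
    using assms by simp
qed

lemma prod_cube_root_unity_minus:
  fixes w a :: "'a::comm_ring_1"
  assumes w: "w\<^sup>2 + w + 1 = 0"
  shows "(1 - a) * (1 - w * a) * (1 - w\<^sup>2 * a) = 1 - a ^ 3"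
proof -
  have "(1 - a) * (1 - w * a) * (1 - w\<^sup>2 * a)
      = 1 - a * (w\<^sup>2 + w + 1) + a\<^sup>2 * w * (w\<^sup>2 + w + 1) - a ^ 3 * w ^ 3"
    by (simp add: algebra_simps power2_eq_square power3_eq_cube)
  then show ?thesis
    using w cube_root_unity_cube[OF w] by simp
qed

lemma prod_cube_root_unity_add:
  fixes w a b :: "'a::comm_ring_1"
  assumes w: "w\<^sup>2 + w + 1 = 0"
  shows "(a + b) * (w * a + b) * (w\<^sup>2 * a + b) = a ^ 3 + b ^ 3"
proof -
  have "(a + b) * (w * a + b) * (w\<^sup>2 * a + b)
      = a ^ 3 * w ^ 3 + b ^ 3 + a\<^sup>2 * b * w * (w\<^sup>2 + w + 1) + a * b\<^sup>2 * (w\<^sup>2 + w + 1)"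
    by (simp add: algebra_simps power2_eq_square power3_eq_cube)
  then show ?thesis
    using w cube_root_unity_cube[OF w] by simp
qed

definition omega :: complex where
  "omega = Complex (-1/2) (sqrt 3 / 2)"

lemma omega_squared_add: "omega\<^sup>2 + omega + 1 = 0"
  unfolding omega_def by (simp add: complex_eq_iff power2_eq_square)

lemma omega_cube: "omega ^ 3 = 1"
  by (rule cube_root_unity_cube[OF omega_squared_add])

lemma norm_omega: "norm omega = 1"
  unfolding omega_def by (simp add: cmod_def power2_eq_square)

lemma omega_power_3_mult_add: "omega ^ (3 * k + r) = omega ^ r"
  by (simp add: power_add power_mult omega_cube)

lemma omega_squared_squared_add: "(omega\<^sup>2)\<^sup>2 + omega\<^sup>2 + 1 = 0"
proof -
  have "(omega\<^sup>2)\<^sup>2 = omega"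
    using omega_power_3_mult_add[of 1 1] by (simp flip: power_mult)
  then show ?thesis
    using omega_squared_add by (simp add: add_ac)
qed

definition gauss_factor :: "'a::comm_ring_1 \<Rightarrow> nat \<Rightarrow> 'a" where
  "gauss_factor y i = (1 - (y ^ (i + 1))\<^sup>2) * (1 + y ^ (i + 1))"

lemma gauss_prod_eq_prod: "gauss_prod n y = (\<Prod>i<n. gauss_factor y i)"
  unfolding gauss_prod_def qpoch_def gauss_factor_def prod.distrib[symmetric]
  by (rule prod.cong) (simp_all add: power2_eq_square power_mult_distrib power_add mult_ac)

lemma gauss_prod_Suc: "gauss_prod (Suc n) y = gauss_prod n y * gauss_factor y n"
  by (simp add: gauss_prod_eq_prod)

lemma gauss_factor_mult:
  "gauss_factor (c * y) i = (1 - (c ^ (i + 1))\<^sup>2 * (y ^ (i + 1))\<^sup>2) * (1 + c ^ (i + 1) * y ^ (i + 1))"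
  unfolding gauss_factor_def by (simp add: power_mult_distrib mult_ac)

lemma gauss_factor_omega_not_dvd:
  assumes "(i + 1) mod 3 \<noteq> 0"
  shows "gauss_factor y i * gauss_factor (omega * y) i * gauss_factor (omega\<^sup>2 * y) i = gauss_factor (y ^ 3) i"
proof -
  define W where "W = omega ^ (i + 1)"
  define Y where "Y = y ^ (i + 1)"
  have "i + 1 = 3 * ((i + 1) div 3) + (i + 1) mod 3"
    by simp
  then have "W = omega ^ ((i + 1) mod 3)"
    unfolding W_def by (metis omega_power_3_mult_add)
  moreover have "(i + 1) mod 3 = 1 \<or> (i + 1) mod 3 = 2"
    using assms by linarith
  ultimately have "W = omega \<or> W = omega\<^sup>2"
    by auto
  then have W: "W\<^sup>2 + W + 1 = 0"
    using omega_squared_add omega_squared_squared_add by auto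
  have "(W\<^sup>2)\<^sup>2 = W ^ 3 * W"
    by (simp add: power2_eq_square power3_eq_cube mult_ac)
  then have W4: "(W\<^sup>2)\<^sup>2 = W"
    using cube_root_unity_cube[OF W] by simp
  have omega2: "(omega\<^sup>2) ^ (i + 1) = W\<^sup>2"
    unfolding W_def by (simp only: power_mult[symmetric] mult.commute)
  have y3: "(y ^ 3) ^ (i + 1) = Y ^ 3"
    unfolding Y_def by (simp only: power_mult[symmetric] mult.commute)
  have "gauss_factor y i * gauss_factor (omega * y) i * gauss_factor (omega\<^sup>2 * y) i
      = ((1 - Y\<^sup>2) * (1 - W * Y\<^sup>2) * (1 - W\<^sup>2 * Y\<^sup>2)) * ((1 - (-Y)) * (1 - W * (-Y)) * (1 - W\<^sup>2 * (-Y)))"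
    unfolding gauss_factor_mult omega2 W_def[symmetric] W4 unfolding gauss_factor_def Y_def[symmetric]
    by (simp add: mult_ac)
  also have "\<dots> = (1 - (Y\<^sup>2) ^ 3) * (1 + Y ^ 3)"
    unfolding prod_cube_root_unity_minus[OF W] by simp
  also have "\<dots> = gauss_factor (y ^ 3) i"
    unfolding gauss_factor_def y3 by (simp only: power_mult[symmetric] mult.commute)
  finally show ?thesis .
qed

lemma gauss_factor_omega_dvd:
  assumes "(i + 1) mod 3 = 0"
  shows "gauss_factor (omega * y) i = gauss_factor y i" "gauss_factor (omega\<^sup>2 * y) i = gauss_factor y i"
proof -
  obtain k where "i + 1 = 3 * k"
    using assms by auto
  then have w1: "omega ^ (i + 1) = 1"
    using omega_power_3_mult_add[of k 0] by simp
  have "(omega\<^sup>2) ^ (i + 1) = (omega ^ (i + 1))\<^sup>2"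
    by (simp only: power_mult[symmetric] mult.commute)
  then have "(omega\<^sup>2) ^ (i + 1) = 1"
    by (simp only: w1 power_one)
  then show "gauss_factor (omega * y) i = gauss_factor y i" "gauss_factor (omega\<^sup>2 * y) i = gauss_factor y i"
    unfolding gauss_factor_mult w1 by (simp_all add: gauss_factor_def)
qed

lemma gauss_factor_3_mult_2: "gauss_factor y (3 * m + 2) = gauss_factor (y ^ 3) m"
proof -
  have "3 * m + 2 + 1 = 3 * (m + 1)"
    by simp
  then show ?thesis
    unfolding gauss_factor_def by (simp only: power_mult)
qed

lemma gauss_factor_power_9: "gauss_factor (y ^ 9) m = gauss_factor (y ^ 3) (3 * m + 2)"
proof -
  have "(y ^ 9) ^ (m + 1) = (y ^ 3) ^ (3 * m + 2 + 1)"
    by (simp add: power_mult[symmetric] algebra_simps)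
  then show ?thesis
    unfolding gauss_factor_def by simp
qed

lemma gauss_prod_3_Suc:
  "gauss_prod (3 * Suc m) y
   = gauss_prod (3 * m) y * (gauss_factor y (3 * m) * gauss_factor y (3 * m + 1) * gauss_factor y (3 * m + 2))"
proof -
  have "(\<Prod>i<3. f i) = f 0 * f 1 * f 2" for f :: "nat \<Rightarrow> 'a"
    by (simp add: numeral_3_eq_3 numeral_2_eq_2 mult_ac)
  moreover have "3 * Suc m = 3 * m + 3"
    by simp
  ultimately show ?thesis
    unfolding gauss_prod_eq_prod by (simp only: prod_lessThan_add) (simp add: mult_ac)
qed

lemma gauss_prod_omega:
  "gauss_prod (3 * m) y * gauss_prod (3 * m) (omega * y) * gauss_prod (3 * m) (omega\<^sup>2 * y) * gauss_prod m (y ^ 9)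
   = gauss_prod (3 * m) (y ^ 3) * (gauss_prod m (y ^ 3)) ^ 3"
proof (induction m)
  case 0
  then show ?case by (simp add: gauss_prod_eq_prod)
next
  case (Suc m)
  let ?F = "\<lambda>i. gauss_factor y i * gauss_factor (omega * y) i * gauss_factor (omega\<^sup>2 * y) i"
  have "?F (3 * m) = gauss_factor (y ^ 3) (3 * m)" "?F (3 * m + 1) = gauss_factor (y ^ 3) (3 * m + 1)"
    by (rule gauss_factor_omega_not_dvd; presburger)+
  moreover have "?F (3 * m + 2) = (gauss_factor (y ^ 3) m) ^ 3"
  proof -
    have dvd: "(3 * m + 2 + 1) mod 3 = 0"
      by presburger
    have "?F (3 * m + 2) = (gauss_factor y (3 * m + 2)) ^ 3"
      unfolding gauss_factor_omega_dvd[OF dvd] by (simp only: power3_eq_cube)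
    then show ?thesis
      by (simp only: gauss_factor_3_mult_2)
  qed
  moreover have "gauss_prod (3 * Suc m) y * gauss_prod (3 * Suc m) (omega * y)
        * gauss_prod (3 * Suc m) (omega\<^sup>2 * y) * gauss_prod (Suc m) (y ^ 9)
      = (gauss_prod (3 * m) y * gauss_prod (3 * m) (omega * y) * gauss_prod (3 * m) (omega\<^sup>2 * y) * gauss_prod m (y ^ 9))
        * (?F (3 * m) * ?F (3 * m + 1) * ?F (3 * m + 2) * gauss_factor (y ^ 9) m)"
    unfolding gauss_prod_3_Suc gauss_prod_Suc by (simp add: mult_ac)
  ultimately show ?case
    unfolding Suc.IH gauss_factor_power_9 gauss_prod_3_Suc gauss_prod_Suc
    by (simp add: mult_ac power_mult_distrib)
qed

lemma psi_omega_product: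
  fixes y :: complex
  assumes y: "norm y < 1"
  shows "psi y * psi (omega * y) * psi (omega\<^sup>2 * y) * psi (y ^ 9) = psi (y ^ 3) ^ 4"
proof -
  have n1: "norm (omega * y) < 1" "norm (omega\<^sup>2 * y) < 1"
    using y by (simp_all add: norm_mult norm_power norm_omega)
  have n2: "norm (y ^ 9) < 1" "norm (y ^ 3) < 1"
    using norm_power_less_one[OF y] by auto
  have sub: "(\<lambda>m. gauss_prod (3 * m) z) \<longlonglongrightarrow> psi z" if "norm z < 1" for z :: complex
    by (rule filterlim_compose[OF gauss_prod_tendsto_psi[OF that] filterlim_subseq])
       (auto simp: strict_mono_def)
  have "(\<lambda>m. gauss_prod (3 * m) y * gauss_prod (3 * m) (omega * y) * gauss_prod (3 * m) (omega\<^sup>2 * y)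
          * gauss_prod m (y ^ 9)) \<longlonglongrightarrow> psi y * psi (omega * y) * psi (omega\<^sup>2 * y) * psi (y ^ 9)"
    by (intro tendsto_mult sub gauss_prod_tendsto_psi y n1 n2)
  moreover have "(\<lambda>m. gauss_prod (3 * m) (y ^ 3) * (gauss_prod m (y ^ 3)) ^ 3) \<longlonglongrightarrow> psi (y ^ 3) * psi (y ^ 3) ^ 3"
    by (intro tendsto_mult tendsto_power sub gauss_prod_tendsto_psi n2)
  ultimately have "psi y * psi (omega * y) * psi (omega\<^sup>2 * y) * psi (y ^ 9) = psi (y ^ 3) * psi (y ^ 3) ^ 3"
    unfolding gauss_prod_omega using LIMSEQ_unique by blast
  then show ?thesis
    by (simp add: numeral_eq_Suc)
qed

text \<open>Dissecting \<open>\<psi>(x)\<close>, \<open>\<psi>(\<omega>x)\<close>, \<open>\<psi>(\<omega>\<^sup>2x)\<close> turns their product into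
  \<open>(x\<psi>(x\<^sup>9))\<^sup>3 + f(x\<^sup>3, x\<^sup>6)\<^sup>3\<close>.\<close>

lemma ramanujan_cubic_identity_complex:
  fixes x :: complex
  assumes x: "norm x < 1"
  shows "(x ^ 3 * psi (x ^ 9) ^ 3 + f12 (x ^ 3) ^ 3) * psi (x ^ 9) = psi (x ^ 3) ^ 4"
proof -
  have n: "norm (omega * x) < 1" "norm (omega\<^sup>2 * x) < 1"
    using x by (simp_all add: norm_mult norm_power norm_omega)
  have p: "(omega * x) ^ 9 = x ^ 9" "(omega * x) ^ 3 = x ^ 3"
    "(omega\<^sup>2 * x) ^ 9 = x ^ 9" "(omega\<^sup>2 * x) ^ 3 = x ^ 3"
    using omega_power_3_mult_add[of 3 0] omega_power_3_mult_add[of 1 0]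
      omega_power_3_mult_add[of 6 0] omega_power_3_mult_add[of 2 0]
    by (simp_all add: power_mult_distrib flip: power_mult)
  have "psi (omega * x) = omega * (x * psi (x ^ 9)) + f12 (x ^ 3)"
    using psi_3_dissection[OF n(1)] by (simp only: p mult.assoc)
  moreover have "psi (omega\<^sup>2 * x) = omega\<^sup>2 * (x * psi (x ^ 9)) + f12 (x ^ 3)"
    using psi_3_dissection[OF n(2)] by (simp only: p mult.assoc)
  ultimately have "psi x * psi (omega * x) * psi (omega\<^sup>2 * x) = (x * psi (x ^ 9)) ^ 3 + f12 (x ^ 3) ^ 3"
    unfolding psi_3_dissection[OF x] by (simp only: prod_cube_root_unity_add[OF omega_squared_add])
  then have "((x * psi (x ^ 9)) ^ 3 + f12 (x ^ 3) ^ 3) * psi (x ^ 9) = psi (x ^ 3) ^ 4"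
    using psi_omega_product[OF x] by simp
  then show ?thesis
    by (simp add: power_mult_distrib)
qed

lemma psi_of_real:
  fixes r :: real
  assumes "\<bar>r\<bar> < 1"
  shows "psi (complex_of_real r) = complex_of_real (psi r)"
proof -
  have "(\<lambda>n. complex_of_real (r ^ tri n)) sums complex_of_real (psi r)"
    unfolding psi_def sums_of_real_iff using assms by (intro summable_sums summable_psi) simp
  then show ?thesis
    unfolding psi_def by (simp add: sums_iff)
qed

lemma f12_of_real:
  fixes r :: real
  assumes "\<bar>r\<bar> < 1"
  shows "f12 (complex_of_real r) = complex_of_real (f12 r)"
proof -
  have "(\<lambda>j. complex_of_real (r ^ pent_minus j + r ^ pent_plus j)) sums complex_of_real (f12 r)"
    unfolding f12_def sums_of_real_iff using assms
    by (intro summable_sums summable_add summable_pent_minus summable_pent_plus) simp_all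
  then show ?thesis
    unfolding f12_def by (simp add: sums_iff)
qed

lemma ramanujan_cubic_identity:
  fixes x :: real
  assumes x: "\<bar>x\<bar> < 1"
  shows "(x ^ 3 * psi (x ^ 9) ^ 3 + f12 (x ^ 3) ^ 3) * psi (x ^ 9) = psi (x ^ 3) ^ 4"
proof -
  have x9: "\<bar>x ^ 9\<bar> < 1" and x3: "\<bar>x ^ 3\<bar> < 1"
    using norm_power_less_one[of x 9] norm_power_less_one[of x 3] x by auto
  have "complex_of_real ((x ^ 3 * psi (x ^ 9) ^ 3 + f12 (x ^ 3) ^ 3) * psi (x ^ 9))
      = complex_of_real (psi (x ^ 3) ^ 4)"
    using ramanujan_cubic_identity_complex[of "complex_of_real x"] x
      psi_of_real[OF x9] psi_of_real[OF x3] f12_of_real[OF x3]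
    by (simp add: of_real_power[symmetric] del: of_real_power)
  then show ?thesis
    by (simp only: of_real_eq_iff)
qed

lemma cf_tail_tendsto_f12_psi:
  fixes q :: real
  assumes q: "\<bar>q\<bar> < 1"
  shows "psi (q ^ 3) \<noteq> 0 \<and> (\<lambda>n. cf_tail q 1 n) \<longlonglongrightarrow> f12 q / psi (q ^ 3)"
proof -
  define G where "G k = cubic_F q (q ^ k)" for k
  have rec: "G k = G (Suc k) + (q ^ Suc k + q ^ (2 * Suc k)) * G (Suc (Suc k))" for k
  proof -
    have "(q ^ Suc k)\<^sup>2 = q ^ (2 * Suc k)"
      by (metis power_mult mult.commute)
    moreover have "q ^ k * q = q ^ Suc k" "q ^ k * q\<^sup>2 = q ^ Suc (Suc k)"
      by (simp_all add: power2_eq_square mult_ac)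
    ultimately show ?thesis
      using cubic_F_recurrence[OF q, of "q ^ k"] unfolding G_def by (simp only:)
  qed
  have lim: "G \<longlonglongrightarrow> qexp (q\<^sup>2) q"
    unfolding G_def by (rule cubic_F_tendsto_qexp[OF q])
  have "qexp (q\<^sup>2) q \<noteq> 0"
    using q by (intro qexp_nonzero abs_power2_less_1)
  note ratio = cf_tail_tendsto_ratio[OF q rec lim this]
  have "G 0 = qexp q q * f12 q" "G 1 = qexp q q * psi (q ^ 3)"
    unfolding G_def using cubic_F_one[OF q] cubic_F_q[OF q] by simp_all
  then show ?thesis
    using ratio[of 0] ratio[of 1] by auto
qed

lemma f12_nonzero:
  fixes q :: real
  assumes "\<bar>q\<bar> < 1"
  shows "f12 q \<noteq> 0"
proof -
  have lim: "(\<lambda>n. cf_tail q 1 n) \<longlonglongrightarrow> f12 q / psi (q ^ 3)"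
    using cf_tail_tendsto_f12_psi[OF assms] by blast
  have "f12 q / psi (q ^ 3) \<ge> 1/2"
    by (rule tendsto_lowerbound[OF lim], intro always_eventually allI cf_tail_ge, simp)
  then show ?thesis by auto
qed

lemma cubic_cf_eq_psi_div_f12:
  fixes q :: real
  assumes q: "\<bar>q\<bar> < 1"
  shows "cubic_cf q = root 3 q * psi (q ^ 3) / f12 q"
proof -
  have "psi (q ^ 3) \<noteq> 0" and lim: "(\<lambda>n. cf_tail q 1 n) \<longlonglongrightarrow> f12 q / psi (q ^ 3)"
    using cf_tail_tendsto_f12_psi[OF q] by auto
  moreover have "f12 q \<noteq> 0"
    by (rule f12_nonzero[OF q])
  ultimately have "cubic_cf_conv q \<longlonglongrightarrow> root 3 q / (f12 q / psi (q ^ 3))"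
    unfolding cubic_cf_conv_def by (intro tendsto_intros lim) simp
  then show ?thesis
    unfolding cubic_cf_def by (simp add: limI)
qed

lemma cubic_modular_equation_algebra:
  fixes r B F u H :: real
  assumes nz: "B \<noteq> 0" "F \<noteq> 0" "H \<noteq> 0"
    and E1: "(r ^ 3 * B ^ 3 + F ^ 3) * B = (u + H) ^ 4"
    and E2: "r ^ 3 * B ^ 4 = u * (u ^ 3 + H ^ 3)"
  shows "(r * B / F) ^ 3 = u / H * (1 - u / H + (u / H)\<^sup>2) / (1 + 2 * (u / H) + 4 * (u / H)\<^sup>2)"
proof -
  define K where "K = H\<^sup>2 + 2 * u * H + 4 * u\<^sup>2"
  have FB: "F ^ 3 * B = H * (u + H) * K"
    using E1 E2 unfolding K_def by algebra
  then have "u + H \<noteq> 0" "K \<noteq> 0"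
    using nz by auto
  have "(r * B / F) ^ 3 = r ^ 3 * B ^ 4 / (F ^ 3 * B)"
    using nz by (simp add: power_mult_distrib power_divide eval_nat_numeral field_simps)
  also have "\<dots> = (u + H) * (u * (H\<^sup>2 - u * H + u\<^sup>2)) / ((u + H) * (H * K))"
    unfolding E2 FB by (simp add: power2_eq_square power3_eq_cube algebra_simps)
  also have "\<dots> = u * (H\<^sup>2 - u * H + u\<^sup>2) / (H * K)"
    using \<open>u + H \<noteq> 0\<close> by (rule nonzero_mult_divide_mult_cancel_left)
  also have "\<dots> = u / H * ((H\<^sup>2 - u * H + u\<^sup>2) / H\<^sup>2) / (K / H\<^sup>2)"
    using nz \<open>K \<noteq> 0\<close> by (simp add: field_simps power2_eq_square)
  also have "(H\<^sup>2 - u * H + u\<^sup>2) / H\<^sup>2 = 1 - u / H + (u / H)\<^sup>2"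
    using nz by (simp add: field_simps power2_eq_square)
  also have "K / H\<^sup>2 = 1 + 2 * (u / H) + 4 * (u / H)\<^sup>2"
    using nz unfolding K_def by (simp add: field_simps power2_eq_square)
  finally show ?thesis .
qed

theorem theorem2p2:
  fixes q :: real
  assumes "\<bar>q\<bar> < 1"
  shows "(cubic_cf q) ^ 3 = cubic_cf (q ^ 3) *
           (1 - cubic_cf (q ^ 3) + (cubic_cf (q ^ 3))\<^sup>2) /
           (1 + 2 * cubic_cf (q ^ 3) + 4 * (cubic_cf (q ^ 3))\<^sup>2)"
proof -
  define r where "r = root 3 q"
  have r3: "r ^ 3 = q" and r: "\<bar>r\<bar> < 1"
    using assms by (simp_all add: r_def odd_real_root_pow real_root_abs[symmetric])
  have q3: "\<bar>q ^ 3\<bar> < 1"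
    using assms by (simp add: power_abs power_less_one_iff)
  have V: "cubic_cf q = r * psi (q ^ 3) / f12 q"
    using cubic_cf_eq_psi_div_f12[OF assms] by (simp add: r_def)
  have V3: "cubic_cf (q ^ 3) = q * psi (q ^ 9) / f12 (q ^ 3)"
    using cubic_cf_eq_psi_div_f12[OF q3] by (simp add: odd_real_root_power_cancel power_mult[symmetric])
  have "r ^ 9 = q ^ 3"
    unfolding r3[symmetric] by (simp flip: power_mult)
  then have E1: "(r ^ 3 * psi (q ^ 3) ^ 3 + f12 q ^ 3) * psi (q ^ 3) = (q * psi (q ^ 9) + f12 (q ^ 3)) ^ 4"
    using ramanujan_cubic_identity[OF r] psi_3_dissection[of q] assms by (simp add: r3)
  have E2: "r ^ 3 * psi (q ^ 3) ^ 4 = q * psi (q ^ 9) * ((q * psi (q ^ 9)) ^ 3 + f12 (q ^ 3) ^ 3)"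
    unfolding r3 ramanujan_cubic_identity[OF assms, symmetric] by (simp add: power_mult_distrib algebra_simps)
  have "psi (q ^ 3) \<noteq> 0" "f12 q \<noteq> 0" "f12 (q ^ 3) \<noteq> 0"
    using cf_tail_tendsto_f12_psi[OF assms] f12_nonzero[OF assms] f12_nonzero[OF q3] by auto
  then show ?thesis
    unfolding V V3 using E1 E2 by (rule cubic_modular_equation_algebra)
qed

end
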